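(* Let $k=\mathbb{Q}(t_1,t_2,t_3,t_4)$ be a purely transcendental extension of $\mathbb{Q}$ of transcendence degree $4$, let $E/k$ be the elliptic curve $y^2=x(x-t_1)(x-t_2)$, and let $K=k(x)[y]/(y^2-x(x-t_1)(x-t_2))$ be its function field. Then the central simple algebra $A=\langle x,t_3\rangle\otimes\langle x-t_1,t_4\rangle$ over $K$ has index $4$ (i.e. is a division algebra).
   Context: For a field $L$ and $u,v\in L^*$, $\langle u,v\rangle$ denotes the quaternion algebra over $L$ generated by $i,j$ with $i^2=u$, $j^2=v$, $ij=-ji$. The index of a central simple algebra is the index of its Brauer class. *)

theory Defs
  imports "HOL-Computational_Algebra.Computational_Algebra"
          "HOL-Computational_Algebra.Fraction_Field"
begin

text \<open>Elements of an algebra with basis the monomials e_S = g_i1 g_i2 ... (i1 < i2 < ...),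
  S a subset of {..<n}, are coefficient functions nat set => 'a (zero outside Pow {..<n}).
  The generators satisfy g_i^2 = sq i (central scalars) and g_j g_i = eps i j * g_i g_j for j < i.
  Hence e_S e_T = (prod over i in S, j in T, j < i of eps i j) * (prod over j in S Int T of sq j) * e_(S symdiff T).\<close>

definition monprod :: "(nat \<Rightarrow> 'a::comm_ring_1) \<Rightarrow> (nat \<Rightarrow> nat \<Rightarrow> 'a) \<Rightarrow> nat set \<Rightarrow> nat set \<Rightarrow> 'a" where
  "monprod sq eps S T =
     (\<Prod>p\<in>{(i,j). i \<in> S \<and> j \<in> T \<and> j < i}. eps (fst p) (snd p)) * (\<Prod>j\<in>S \<inter> T. sq j)"

definition gen_mult :: "nat \<Rightarrow> (nat \<Rightarrow> 'a::comm_ring_1) \<Rightarrow> (nat \<Rightarrow> nat \<Rightarrow> 'a)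
    \<Rightarrow> (nat set \<Rightarrow> 'a) \<Rightarrow> (nat set \<Rightarrow> 'a) \<Rightarrow> (nat set \<Rightarrow> 'a)" where
  "gen_mult n sq eps u v = (\<lambda>U. \<Sum>S\<in>Pow {..<n}. \<Sum>T\<in>Pow {..<n}.
       if (S - T) \<union> (T - S) = U then u S * v T * monprod sq eps S T else 0)"

definition gen_one :: "nat set \<Rightarrow> 'a::comm_ring_1" where
  "gen_one = (\<lambda>S. if S = {} then 1 else 0)"

text \<open>The biquaternion algebra <a,b> (x) <c,d>: generators i1 = g0, j1 = g1, i2 = g2, j2 = g3,
  with i1^2 = a, j1^2 = b, i1 j1 = - j1 i1, i2^2 = c, j2^2 = d, i2 j2 = - j2 i2,
  and generators of different factors commuting.\<close>

definition biquat_sq :: "'a::comm_ring_1 \<Rightarrow> 'a \<Rightarrow> 'a \<Rightarrow> 'a \<Rightarrow> nat \<Rightarrow> 'a" where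
  "biquat_sq a b c d i = [a, b, c, d] ! i"

definition biquat_eps :: "nat \<Rightarrow> nat \<Rightarrow> 'a::comm_ring_1" where
  "biquat_eps i j = (if (i, j) = (1, 0) \<or> (i, j) = (3, 2) then - 1 else 1)"

definition biquat_mult :: "'a::comm_ring_1 \<Rightarrow> 'a \<Rightarrow> 'a \<Rightarrow> 'a \<Rightarrow>
    (nat set \<Rightarrow> 'a) \<Rightarrow> (nat set \<Rightarrow> 'a) \<Rightarrow> (nat set \<Rightarrow> 'a)" where
  "biquat_mult a b c d = gen_mult 4 (biquat_sq a b c d) biquat_eps"

type_synonym kfield = "rat poly poly poly poly fract"
type_synonym kx = "kfield poly fract"

definition t1 :: kfield where "t1 = Fract [:[:[:[:0, 1:]:]:]:] 1"
definition t2 :: kfield where "t2 = Fract [:[:[:0, 1:]:]:] 1"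
definition t3 :: kfield where "t3 = Fract [:[:0, 1:]:] 1"
definition t4 :: kfield where "t4 = Fract [:0, 1:] 1"

definition const_kx :: "kfield \<Rightarrow> kx" where "const_kx c = Fract [:c:] 1"
definition xvar :: kx where "xvar = Fract [:0, 1:] 1"

definition cubic :: kx where
  "cubic = xvar * (xvar - const_kx t1) * (xvar - const_kx t2)"

text \<open>K = k(x)[y]/(y^2 - cubic): elements are represented by their canonical representatives,
  polynomials in y over k(x) of degree < 2; multiplication is followed by reduction mod kmod.\<close>
definition kmod :: "kx poly" where "kmod = [:- cubic, 0, 1:]"

definition K_elem :: "kx poly \<Rightarrow> bool" where "K_elem p \<longleftrightarrow> degree p < 2"

definition A_carrier :: "(nat set \<Rightarrow> kx poly) set" where
  "A_carrier = {u. (\<forall>S. K_elem (u S)) \<and> (\<forall>S. S \<notin> Pow {..<4} \<longrightarrow> u S = 0)}"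

definition A_mult :: "(nat set \<Rightarrow> kx poly) \<Rightarrow> (nat set \<Rightarrow> kx poly) \<Rightarrow> (nat set \<Rightarrow> kx poly)" where
  "A_mult u v = (\<lambda>S. biquat_mult [:xvar:] [:const_kx t3:] [:xvar - const_kx t1:] [:const_kx t4:] u v S
                      mod kmod)"

definition A_one :: "nat set \<Rightarrow> kx poly" where "A_one = gen_one"

definition A_zero :: "nat set \<Rightarrow> kx poly" where "A_zero = (\<lambda>_. 0)"

end

(* Over k(x), the algebra A is generated by the anticommuting pairs i1, j1 and i2, j2 together
   with a central generator y with y^2 = x (x - t1) (x - t2). Being finite-dimensional, it is a
   division algebra as soon as it has no zero divisors, and after clearing denominators this has
   to be shown over R = Q[t1, t2, t3, t4][x].

   Absence of zero divisors descends along specialisations. Let h be a homomorphism whose kernel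
   is generated by p, and let a generator g have square p w with h w /= 0. If the specialised
   algebra without g has no zero divisors, then neither has the original one: in a relation
   u v = 0 with u and v not divisible by p, split u and v into their parts without and with g;
   reducing modulo p first kills the parts without g and then, after cancelling one factor p,
   the parts with g, a contradiction. The specialisations t4 := 0, t3 := 0, x := t2, t2 := 0 and
   t1 := 0 remove j2, j1, y, i1 and i2 in turn and end with the rationals. *)

theory Submission
  imports Defs "HOL-Library.Function_Algebras"
begin

section \<open>Products of monomials in the generators\<close>

lemma sym_diff_eq_iff: "sym_diff S T = U \<longleftrightarrow> T = sym_diff S U"
  by blast

lemma gen_mult_eq:
  assumes "U \<subseteq> {..<n}"
  shows "gen_mult n sq eps u v U =
    (\<Sum>S\<in>Pow {..<n}. u S * v (sym_diff S U) * monprod sq eps S (sym_diff S U))"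
  unfolding gen_mult_def sym_diff_eq_iff
proof (rule sum.cong[OF refl])
  fix S assume "S \<in> Pow {..<n}"
  then have "sym_diff S U \<in> Pow {..<n}" using assms by auto
  then show "(\<Sum>T\<in>Pow {..<n}. if T = sym_diff S U then u S * v T * monprod sq eps S T else 0) =
      u S * v (sym_diff S U) * monprod sq eps S (sym_diff S U)"
    by (simp add: sum.delta')
qed

lemma gen_mult_outside:
  assumes "\<not> U \<subseteq> {..<n}"
  shows "gen_mult n sq eps u v U = 0"
  unfolding gen_mult_def using assms by (intro sum.neutral ballI) auto

lemma gen_mult_add_left:
  "gen_mult n sq eps (\<lambda>S. u S + u' S) v U = gen_mult n sq eps u v U + gen_mult n sq eps u' v U"
  by (cases "U \<subseteq> {..<n}") (simp_all add: gen_mult_eq gen_mult_outside sum.distrib algebra_simps)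

lemma gen_mult_add_right:
  "gen_mult n sq eps u (\<lambda>S. v S + v' S) U = gen_mult n sq eps u v U + gen_mult n sq eps u v' U"
  by (cases "U \<subseteq> {..<n}") (simp_all add: gen_mult_eq gen_mult_outside sum.distrib algebra_simps)

lemma gen_mult_scale_left:
  "gen_mult n sq eps (\<lambda>S. c * u S) v U = c * gen_mult n sq eps u v U"
  by (cases "U \<subseteq> {..<n}") (simp_all add: gen_mult_eq gen_mult_outside sum_distrib_left algebra_simps)

lemma gen_mult_scale_right:
  "gen_mult n sq eps u (\<lambda>S. c * v S) U = c * gen_mult n sq eps u v U"
  by (cases "U \<subseteq> {..<n}") (simp_all add: gen_mult_eq gen_mult_outside sum_distrib_left algebra_simps)

lemma gen_mult_zero_left: "gen_mult n sq eps (\<lambda>_. 0) v U = 0"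
  by (cases "U \<subseteq> {..<n}") (simp_all add: gen_mult_eq gen_mult_outside)

lemma gen_mult_zero_right: "gen_mult n sq eps u (\<lambda>_. 0) U = 0"
  by (cases "U \<subseteq> {..<n}") (simp_all add: gen_mult_eq gen_mult_outside)

lemma gen_mult_eq_0I:
  assumes "\<And>S. u S * v (sym_diff S U) = 0"
  shows "gen_mult n sq eps u v U = 0"
  using assms by (cases "U \<subseteq> {..<n}") (simp_all add: gen_mult_eq gen_mult_outside)

lemma finite_pairs_below: "finite S \<Longrightarrow> finite T \<Longrightarrow> finite {(i, j). i \<in> S \<and> j \<in> T \<and> (j::nat) < i}"
  by (rule finite_subset[of _ "S \<times> T"]) auto

lemma monprod_insert_left:
  fixes sq :: "nat \<Rightarrow> 'a::comm_ring_1"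
  assumes "finite S" "finite T" "m \<notin> S"
  shows "monprod sq eps (insert m S) T =
    monprod sq eps S T * (\<Prod>j\<in>{j\<in>T. j < m}. eps m j) * (if m \<in> T then sq m else 1)"
proof -
  have pairs: "{(i, j). i \<in> insert m S \<and> j \<in> T \<and> j < i} =
      {(i, j). i \<in> S \<and> j \<in> T \<and> j < i} \<union> (\<lambda>j. (m, j)) ` {j\<in>T. j < m}" by auto
  have eps: "(\<Prod>p\<in>{(i, j). i \<in> insert m S \<and> j \<in> T \<and> j < i}. eps (fst p) (snd p)) =
      (\<Prod>p\<in>{(i, j). i \<in> S \<and> j \<in> T \<and> j < i}. eps (fst p) (snd p)) * (\<Prod>j\<in>{j\<in>T. j < m}. eps m j)"
    unfolding pairs using assms
    by (subst prod.union_disjoint) (auto intro: finite_pairs_below simp: prod.reindex inj_on_def)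
  have sq: "(\<Prod>j\<in>insert m S \<inter> T. sq j) = (\<Prod>j\<in>S \<inter> T. sq j) * (if m \<in> T then sq m else 1)"
    using assms by (cases "m \<in> T") (simp_all add: Int_insert_left mult.commute)
  show ?thesis unfolding monprod_def eps sq by (simp add: algebra_simps)
qed

lemma monprod_insert_right:
  fixes sq :: "nat \<Rightarrow> 'a::comm_ring_1"
  assumes "finite S" "finite T" "m \<notin> T"
  shows "monprod sq eps S (insert m T) =
    monprod sq eps S T * (\<Prod>i\<in>{i\<in>S. m < i}. eps i m) * (if m \<in> S then sq m else 1)"
proof -
  have pairs: "{(i, j). i \<in> S \<and> j \<in> insert m T \<and> j < i} =
      {(i, j). i \<in> S \<and> j \<in> T \<and> j < i} \<union> (\<lambda>i. (i, m)) ` {i\<in>S. m < i}" by auto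
  have eps: "(\<Prod>p\<in>{(i, j). i \<in> S \<and> j \<in> insert m T \<and> j < i}. eps (fst p) (snd p)) =
      (\<Prod>p\<in>{(i, j). i \<in> S \<and> j \<in> T \<and> j < i}. eps (fst p) (snd p)) * (\<Prod>i\<in>{i\<in>S. m < i}. eps i m)"
    unfolding pairs using assms
    by (subst prod.union_disjoint) (auto intro: finite_pairs_below simp: prod.reindex inj_on_def)
  have sq: "(\<Prod>j\<in>S \<inter> insert m T. sq j) = (\<Prod>j\<in>S \<inter> T. sq j) * (if m \<in> S then sq m else 1)"
    using assms by (cases "m \<in> S") (simp_all add: Int_insert_right mult.commute)
  show ?thesis unfolding monprod_def eps sq by (simp add: algebra_simps)
qed

lemma monprod_insert_both:
  fixes sq :: "nat \<Rightarrow> 'a::comm_ring_1"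
  assumes "finite S" "finite T" "m \<notin> S" "m \<notin> T"
  shows "monprod sq eps (insert m S) (insert m T) =
    monprod sq eps S T * (\<Prod>j\<in>{j\<in>T. j < m}. eps m j) * (\<Prod>i\<in>{i\<in>S. m < i}. eps i m) * sq m"
proof -
  have "{j\<in>insert m T. j < m} = {j\<in>T. j < m}" by auto
  then show ?thesis
    using monprod_insert_left[of S "insert m T" m sq eps] monprod_insert_right[of S T m sq eps] assms
    by (simp add: algebra_simps)
qed

lemma sum_Pow_split_member:
  fixes m n :: nat
  assumes "m < n"
  shows "(\<Sum>S\<in>Pow {..<n}. f S) = (\<Sum>S\<in>{S\<in>Pow {..<n}. m \<notin> S}. f S + f (insert m S))"
proof -
  let ?A = "{S\<in>Pow {..<n}. m \<notin> S}"
  have Pow_eq: "Pow {..<n} = ?A \<union> insert m ` ?A"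
  proof
    show "Pow {..<n} \<subseteq> ?A \<union> insert m ` ?A"
    proof
      fix S assume S: "S \<in> Pow {..<n}"
      show "S \<in> ?A \<union> insert m ` ?A"
      proof (cases "m \<in> S")
        case True
        then have "S = insert m (S - {m})" by auto
        then show ?thesis using S by blast
      qed (use S in simp)
    qed
  qed (use assms in auto)
  have inj: "inj_on (insert m) ?A"
    by (rule inj_onI) (metis insert_ident mem_Collect_eq)
  have fin: "finite ?A"
    by (rule finite_subset[of _ "Pow {..<n}"]) auto
  have "(\<Sum>S\<in>Pow {..<n}. f S) = (\<Sum>S\<in>?A \<union> insert m ` ?A. f S)"
    using Pow_eq by (rule arg_cong)
  also have "\<dots> = (\<Sum>S\<in>?A. f S) + (\<Sum>S\<in>?A. f (insert m S))"
    using inj fin by (subst sum.union_disjoint) (auto simp: sum.reindex)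
  finally show ?thesis by (simp add: sum.distrib)
qed

section \<open>Splitting off one generator\<close>

definition even_in :: "nat \<Rightarrow> (nat set \<Rightarrow> 'a::zero) \<Rightarrow> bool" where
  "even_in m a \<longleftrightarrow> (\<forall>S. m \<in> S \<longrightarrow> a S = 0)"

definition odd_in :: "nat \<Rightarrow> (nat set \<Rightarrow> 'a::zero) \<Rightarrow> bool" where
  "odd_in m a \<longleftrightarrow> (\<forall>S. m \<notin> S \<longrightarrow> a S = 0)"

definition even_part :: "nat \<Rightarrow> (nat set \<Rightarrow> 'a::zero) \<Rightarrow> nat set \<Rightarrow> 'a" where
  "even_part m u = (\<lambda>S. if m \<in> S then 0 else u S)"

definition odd_part :: "nat \<Rightarrow> (nat set \<Rightarrow> 'a::zero) \<Rightarrow> nat set \<Rightarrow> 'a" where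
  "odd_part m u = (\<lambda>S. if m \<in> S then u S else 0)"

text \<open>For \<open>a\<close> odd in \<open>g\<^sub>m\<close>, \<open>strip_gen m a\<close> is its cofactor of \<open>g\<^sub>m\<close>. Moving \<open>g\<^sub>m\<close> across a monomial
  of the other factor produces the signs recorded by \<open>twist_left\<close> and \<open>twist_right\<close>.\<close>

definition strip_gen :: "nat \<Rightarrow> (nat set \<Rightarrow> 'a::zero) \<Rightarrow> nat set \<Rightarrow> 'a" where
  "strip_gen m a = (\<lambda>S. if m \<in> S then 0 else a (insert m S))"

definition twist_left :: "nat \<Rightarrow> (nat \<Rightarrow> nat \<Rightarrow> 'a::comm_ring_1) \<Rightarrow> (nat set \<Rightarrow> 'a) \<Rightarrow> nat set \<Rightarrow> 'a" where
  "twist_left m eps c = (\<lambda>T. c T * (\<Prod>j\<in>{j\<in>T. j < m}. eps m j))"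

definition twist_right :: "nat \<Rightarrow> (nat \<Rightarrow> nat \<Rightarrow> 'a::comm_ring_1) \<Rightarrow> (nat set \<Rightarrow> 'a) \<Rightarrow> nat set \<Rightarrow> 'a" where
  "twist_right m eps c = (\<lambda>S. c S * (\<Prod>i\<in>{i\<in>S. m < i}. eps i m))"

lemma even_in_even_part: "even_in m (even_part m u)"
  by (simp add: even_in_def even_part_def)

lemma odd_in_odd_part: "odd_in m (odd_part m u)"
  by (simp add: odd_in_def odd_part_def)

lemma even_in_strip_gen: "even_in m (strip_gen m a)"
  by (simp add: even_in_def strip_gen_def)

lemma even_in_twist_left: "even_in m c \<Longrightarrow> even_in m (twist_left m eps c)"
  by (simp add: even_in_def twist_left_def)

lemma even_in_twist_right: "even_in m c \<Longrightarrow> even_in m (twist_right m eps c)"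
  by (simp add: even_in_def twist_right_def)

lemma even_part_plus_odd_part: "(\<lambda>S. even_part m u S + odd_part m u S) = (u :: nat set \<Rightarrow> 'a::monoid_add)"
  by (rule ext) (simp add: even_part_def odd_part_def)

lemma even_odd_parts_eq_0:
  "even_part m u = (\<lambda>_. 0) \<Longrightarrow> odd_part m u = (\<lambda>_. 0) \<Longrightarrow> u = (\<lambda>_. 0::'a::monoid_add)"
  by (metis add_0 even_part_plus_odd_part)

lemma gen_mult_odd_left:
  fixes a c :: "nat set \<Rightarrow> 'a::comm_ring_1"
  assumes "odd_in m a" "m < n" "m \<notin> U"
  shows "gen_mult n sq eps a c (insert m U) = gen_mult n sq eps (strip_gen m a) (twist_left m eps c) U"
proof (cases "U \<subseteq> {..<n}")
  case True
  then have U: "insert m U \<subseteq> {..<n}" using assms by auto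
  show ?thesis
    unfolding gen_mult_eq[OF True] gen_mult_eq[OF U] sum_Pow_split_member[OF \<open>m < n\<close>]
  proof (rule sum.cong[OF refl])
    fix S assume "S \<in> {S\<in>Pow {..<n}. m \<notin> S}"
    then have S: "S \<subseteq> {..<n}" "m \<notin> S" by auto
    let ?T = "sym_diff S U"
    have fin: "finite S" "finite ?T" using S True by (auto intro: finite_subset[of _ "{..<n}"])
    have T: "m \<notin> ?T" using S assms by auto
    have sd: "sym_diff S (insert m U) = insert m ?T" "sym_diff (insert m S) (insert m U) = ?T"
      "sym_diff (insert m S) U = insert m ?T"
      using S assms by auto
    have a: "a S = 0" "strip_gen m a S = a (insert m S)" "strip_gen m a (insert m S) = 0"
      using assms S by (simp_all add: odd_in_def strip_gen_def)
    have mp: "monprod sq eps (insert m S) ?T = monprod sq eps S ?T * (\<Prod>j\<in>{j\<in>?T. j < m}. eps m j)"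
      using monprod_insert_left[OF fin S(2), of sq eps] by (simp only: T if_False mult_1_right)
    show "a S * c (sym_diff S (insert m U)) * monprod sq eps S (sym_diff S (insert m U)) +
        a (insert m S) * c (sym_diff (insert m S) (insert m U)) *
          monprod sq eps (insert m S) (sym_diff (insert m S) (insert m U)) =
        strip_gen m a S * twist_left m eps c ?T * monprod sq eps S ?T +
        strip_gen m a (insert m S) * twist_left m eps c (sym_diff (insert m S) U) *
          monprod sq eps (insert m S) (sym_diff (insert m S) U)"
      unfolding sd a mp twist_left_def by (simp add: ac_simps)
  qed
qed (simp add: gen_mult_outside)

lemma gen_mult_odd_right:
  fixes a c :: "nat set \<Rightarrow> 'a::comm_ring_1"
  assumes "odd_in m a" "even_in m c" "m < n" "m \<notin> U"
  shows "gen_mult n sq eps c a (insert m U) = gen_mult n sq eps (twist_right m eps c) (strip_gen m a) U"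
proof (cases "U \<subseteq> {..<n}")
  case True
  then have U: "insert m U \<subseteq> {..<n}" using assms by auto
  show ?thesis
    unfolding gen_mult_eq[OF True] gen_mult_eq[OF U] sum_Pow_split_member[OF \<open>m < n\<close>]
  proof (rule sum.cong[OF refl])
    fix S assume "S \<in> {S\<in>Pow {..<n}. m \<notin> S}"
    then have S: "S \<subseteq> {..<n}" "m \<notin> S" by auto
    let ?T = "sym_diff S U"
    have fin: "finite S" "finite ?T" using S True by (auto intro: finite_subset[of _ "{..<n}"])
    have T: "m \<notin> ?T" using S assms by auto
    have sd: "sym_diff S (insert m U) = insert m ?T" using S assms by auto
    have c: "c (insert m S) = 0" "twist_right m eps c (insert m S) = 0"
      using assms by (simp_all add: even_in_def twist_right_def)
    have a: "strip_gen m a ?T = a (insert m ?T)" by (simp only: strip_gen_def T if_False)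
    have mp: "monprod sq eps S (insert m ?T) = monprod sq eps S ?T * (\<Prod>i\<in>{i\<in>S. m < i}. eps i m)"
      using monprod_insert_right[OF fin T, of sq eps] by (simp only: S(2) if_False mult_1_right)
    show "c S * a (sym_diff S (insert m U)) * monprod sq eps S (sym_diff S (insert m U)) +
        c (insert m S) * a (sym_diff (insert m S) (insert m U)) *
          monprod sq eps (insert m S) (sym_diff (insert m S) (insert m U)) =
        twist_right m eps c S * strip_gen m a ?T * monprod sq eps S ?T +
        twist_right m eps c (insert m S) * strip_gen m a (sym_diff (insert m S) U) *
          monprod sq eps (insert m S) (sym_diff (insert m S) U)"
      unfolding sd c a mp twist_right_def by (simp add: ac_simps)
  qed
qed (use assms in \<open>simp add: gen_mult_outside\<close>)

lemma gen_mult_odd_odd: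
  fixes a c :: "nat set \<Rightarrow> 'a::comm_ring_1"
  assumes "odd_in m a" "odd_in m c" "m < n" "m \<notin> U"
  shows "gen_mult n sq eps a c U =
    sq m * gen_mult n sq eps (twist_right m eps (strip_gen m a)) (twist_left m eps (strip_gen m c)) U"
proof (cases "U \<subseteq> {..<n}")
  case True
  show ?thesis
    unfolding gen_mult_eq[OF True] sum_Pow_split_member[OF \<open>m < n\<close>] sum_distrib_left
  proof (rule sum.cong[OF refl])
    fix S assume "S \<in> {S\<in>Pow {..<n}. m \<notin> S}"
    then have S: "S \<subseteq> {..<n}" "m \<notin> S" by auto
    let ?T = "sym_diff S U"
    have fin: "finite S" "finite ?T" using S True by (auto intro: finite_subset[of _ "{..<n}"])
    have T: "m \<notin> ?T" "sym_diff (insert m S) U = insert m ?T"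
      using S assms by auto
    note monprod_insert_both[OF fin S(2) T(1), of sq eps]
    moreover have "a S = 0" using assms S by (simp add: odd_in_def)
    ultimately show "a S * c ?T * monprod sq eps S ?T +
        a (insert m S) * c (sym_diff (insert m S) U) * monprod sq eps (insert m S) (sym_diff (insert m S) U) =
        sq m * (twist_right m eps (strip_gen m a) S * twist_left m eps (strip_gen m c) ?T *
          monprod sq eps S ?T +
        twist_right m eps (strip_gen m a) (insert m S) * twist_left m eps (strip_gen m c) (sym_diff (insert m S) U) *
          monprod sq eps (insert m S) (sym_diff (insert m S) U))"
      using S T by (simp add: strip_gen_def twist_left_def twist_right_def ac_simps)
  qed
qed (simp add: gen_mult_outside)

lemma mem_sym_diff: "x \<in> sym_diff S U \<longleftrightarrow> (x \<in> S) \<noteq> (x \<in> U)"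
  by blast

lemma gen_mult_parity_mismatch:
  "even_in m a \<Longrightarrow> even_in m c \<Longrightarrow> m \<in> U \<Longrightarrow> gen_mult n sq eps a c U = 0"
  "odd_in m a \<Longrightarrow> odd_in m c \<Longrightarrow> m \<in> U \<Longrightarrow> gen_mult n sq eps a c U = 0"
  "odd_in m a \<Longrightarrow> even_in m c \<Longrightarrow> m \<notin> U \<Longrightarrow> gen_mult n sq eps a c U = 0"
  "even_in m a \<Longrightarrow> odd_in m c \<Longrightarrow> m \<notin> U \<Longrightarrow> gen_mult n sq eps a c U = 0"
  by (rule gen_mult_eq_0I, metis mem_sym_diff even_in_def odd_in_def mult_zero_left mult_zero_right)+

lemma gen_mult_eq_0_parts:
  assumes "gen_mult n sq eps u v = (\<lambda>_. 0)"
  shows "m \<notin> U \<Longrightarrow> gen_mult n sq eps (even_part m u) (even_part m v) U +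
      gen_mult n sq eps (odd_part m u) (odd_part m v) U = 0"
    and "m \<in> U \<Longrightarrow> gen_mult n sq eps (even_part m u) (odd_part m v) U +
      gen_mult n sq eps (odd_part m u) (even_part m v) U = 0"
proof -
  have "gen_mult n sq eps u v U =
      gen_mult n sq eps (\<lambda>S. even_part m u S + odd_part m u S) (\<lambda>S. even_part m v S + odd_part m v S) U"
    by (simp only: even_part_plus_odd_part)
  then have sum: "gen_mult n sq eps (even_part m u) (even_part m v) U
      + gen_mult n sq eps (even_part m u) (odd_part m v) U
      + gen_mult n sq eps (odd_part m u) (even_part m v) U
      + gen_mult n sq eps (odd_part m u) (odd_part m v) U = 0"
    using fun_cong[OF assms, of U] by (simp add: gen_mult_add_left gen_mult_add_right add.assoc)
  show "gen_mult n sq eps (even_part m u) (even_part m v) U +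
      gen_mult n sq eps (odd_part m u) (odd_part m v) U = 0" if "m \<notin> U"
    using sum by (simp add: gen_mult_parity_mismatch(3)[OF odd_in_odd_part even_in_even_part that]
      gen_mult_parity_mismatch(4)[OF even_in_even_part odd_in_odd_part that])
  show "gen_mult n sq eps (even_part m u) (odd_part m v) U +
      gen_mult n sq eps (odd_part m u) (even_part m v) U = 0" if "m \<in> U"
    using sum by (simp add: gen_mult_parity_mismatch(1)[OF even_in_even_part even_in_even_part that]
      gen_mult_parity_mismatch(2)[OF odd_in_odd_part odd_in_odd_part that])
qed

section \<open>Specialisation along a ring homomorphism\<close>

definition is_ring_hom :: "('a::comm_ring_1 \<Rightarrow> 'b::comm_ring_1) \<Rightarrow> bool" where
  "is_ring_hom h \<longleftrightarrow> (\<forall>x y. h (x + y) = h x + h y) \<and> (\<forall>x y. h (x * y) = h x * h y) \<and> h 1 = 1"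

context
  fixes h :: "'a::comm_ring_1 \<Rightarrow> 'b::comm_ring_1"
  assumes hom: "is_ring_hom h"
begin

lemma ring_hom_add: "h (x + y) = h x + h y"
  using hom by (simp add: is_ring_hom_def)

lemma ring_hom_mult: "h (x * y) = h x * h y"
  using hom by (simp add: is_ring_hom_def)

lemma ring_hom_one: "h 1 = 1"
  using hom by (simp add: is_ring_hom_def)

lemma ring_hom_zero: "h 0 = 0"
  using ring_hom_add[of 0 0] by simp

lemma ring_hom_uminus: "h (- x) = - h x"
  using ring_hom_add[of x "- x"] by (simp add: ring_hom_zero eq_neg_iff_add_eq_0 add.commute)

lemma ring_hom_sum: "h (sum f A) = (\<Sum>x\<in>A. h (f x))"
  by (induct A rule: infinite_finite_induct) (simp_all add: ring_hom_zero ring_hom_add)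

lemma ring_hom_prod: "h (prod f A) = (\<Prod>x\<in>A. h (f x))"
  by (induct A rule: infinite_finite_induct) (simp_all add: ring_hom_one ring_hom_mult)

lemma ring_hom_biquat_eps: "h (biquat_eps i j) = biquat_eps i j"
  by (simp add: biquat_eps_def ring_hom_uminus ring_hom_one)

lemma ring_hom_gen_mult:
  "h (gen_mult n sq biquat_eps u v U) = gen_mult n (h \<circ> sq) biquat_eps (h \<circ> u) (h \<circ> v) U"
  by (cases "U \<subseteq> {..<n}")
    (simp_all add: gen_mult_eq gen_mult_outside monprod_def ring_hom_zero ring_hom_sum ring_hom_mult
      ring_hom_prod ring_hom_biquat_eps)

lemma ring_hom_comp_even_part: "h \<circ> even_part m u = even_part m (h \<circ> u)"
  by (auto simp: even_part_def ring_hom_zero)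

lemma ring_hom_comp_odd_part: "h \<circ> odd_part m u = odd_part m (h \<circ> u)"
  by (auto simp: odd_part_def ring_hom_zero)

lemma ring_hom_comp_strip_gen: "h \<circ> strip_gen m a = strip_gen m (h \<circ> a)"
  by (auto simp: strip_gen_def ring_hom_zero)

lemma ring_hom_comp_twist_left: "h \<circ> twist_left m biquat_eps c = twist_left m biquat_eps (h \<circ> c)"
  by (auto simp: twist_left_def ring_hom_mult ring_hom_prod ring_hom_biquat_eps)

lemma ring_hom_comp_twist_right: "h \<circ> twist_right m biquat_eps c = twist_right m biquat_eps (h \<circ> c)"
  by (auto simp: twist_right_def ring_hom_mult ring_hom_prod ring_hom_biquat_eps)

end

lemma is_ring_hom_comp: "is_ring_hom f \<Longrightarrow> is_ring_hom g \<Longrightarrow> is_ring_hom (g \<circ> f)"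
  unfolding is_ring_hom_def by simp

lemma is_ring_hom_poly: "is_ring_hom (\<lambda>p. poly p c)"
  unfolding is_ring_hom_def by simp

lemma is_ring_hom_map_poly:
  assumes "is_ring_hom f"
  shows "is_ring_hom (map_poly f)"
  unfolding is_ring_hom_def
proof (intro conjI allI)
  note hom = ring_hom_zero[OF assms] ring_hom_add[OF assms] ring_hom_mult[OF assms] ring_hom_sum[OF assms]
  show "map_poly f (p + q) = map_poly f p + map_poly f q" for p q
    by (rule poly_eqI) (simp add: coeff_map_poly hom)
  show "map_poly f (p * q) = map_poly f p * map_poly f q" for p q
    by (rule poly_eqI) (simp add: coeff_map_poly coeff_mult hom)
  show "map_poly f 1 = 1"
    by (simp add: ring_hom_one[OF assms])
qed

section \<open>Subalgebras without zero divisors\<close>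

definition in_subalgebra :: "nat set \<Rightarrow> (nat set \<Rightarrow> 'a::zero) \<Rightarrow> bool" where
  "in_subalgebra J u \<longleftrightarrow> (\<forall>S. \<not> S \<subseteq> J \<longrightarrow> u S = 0)"

definition zero_divisor_free :: "nat \<Rightarrow> (nat \<Rightarrow> 'a::idom) \<Rightarrow> nat set \<Rightarrow> bool" where
  "zero_divisor_free n sq J \<longleftrightarrow> (\<forall>u v. in_subalgebra J u \<longrightarrow> in_subalgebra J v \<longrightarrow>
      gen_mult n sq biquat_eps u v = (\<lambda>_. 0) \<longrightarrow> u = (\<lambda>_. 0) \<or> v = (\<lambda>_. 0))"

lemma zero_divisor_freeD:
  "zero_divisor_free n sq J \<Longrightarrow> in_subalgebra J u \<Longrightarrow> in_subalgebra J v \<Longrightarrow>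
    gen_mult n sq biquat_eps u v = (\<lambda>_. 0) \<Longrightarrow> u = (\<lambda>_. 0) \<or> v = (\<lambda>_. 0)"
  unfolding zero_divisor_free_def by blast

lemma in_subalgebra_even_part: "in_subalgebra J u \<Longrightarrow> in_subalgebra (J - {m}) (even_part m u)"
  unfolding in_subalgebra_def even_part_def by auto

lemma in_subalgebra_odd_part: "in_subalgebra J u \<Longrightarrow> in_subalgebra J (odd_part m u)"
  unfolding in_subalgebra_def odd_part_def by auto

lemma in_subalgebra_strip_gen:
  assumes "in_subalgebra J a"
  shows "in_subalgebra (J - {m}) (strip_gen m a)"
  unfolding in_subalgebra_def
proof (intro allI impI)
  fix S assume S: "\<not> S \<subseteq> J - {m}"
  show "strip_gen m a S = 0"
  proof (cases "m \<in> S")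
    case False
    then have "\<not> insert m S \<subseteq> J" using S by blast
    then show ?thesis using assms False by (simp add: in_subalgebra_def strip_gen_def)
  qed (simp add: strip_gen_def)
qed

lemma in_subalgebra_twist_left: "in_subalgebra J c \<Longrightarrow> in_subalgebra J (twist_left m eps c)"
  unfolding in_subalgebra_def twist_left_def by auto

lemma in_subalgebra_twist_right: "in_subalgebra J c \<Longrightarrow> in_subalgebra J (twist_right m eps c)"
  unfolding in_subalgebra_def twist_right_def by auto

lemma in_subalgebra_comp: "in_subalgebra J u \<Longrightarrow> h 0 = 0 \<Longrightarrow> in_subalgebra J (h \<circ> u)"
  unfolding in_subalgebra_def by simp

lemma zero_divisor_free_empty: "zero_divisor_free n (sq :: nat \<Rightarrow> 'a::idom) {}"
  unfolding zero_divisor_free_def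
proof (intro allI impI)
  fix u v :: "nat set \<Rightarrow> 'a"
  assume "in_subalgebra {} u" "in_subalgebra {} v" and uv: "gen_mult n sq biquat_eps u v = (\<lambda>_. 0)"
  then have scalars: "\<forall>S. S \<noteq> {} \<longrightarrow> u S = 0" "\<forall>S. S \<noteq> {} \<longrightarrow> v S = 0"
    by (auto simp: in_subalgebra_def)
  have "gen_mult n sq biquat_eps u v {} = (\<Sum>S\<in>Pow {..<n}. u S * v S * monprod sq biquat_eps S S)"
    by (simp add: gen_mult_eq)
  also have "\<dots> = (\<Sum>S\<in>{{}}. u S * v S * monprod sq biquat_eps S S)"
    using scalars(1) by (intro sum.mono_neutral_right) auto
  also have "\<dots> = u {} * v {}"
    by (simp add: monprod_def)
  finally have "u {} = 0 \<or> v {} = 0"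
    using fun_cong[OF uv, of "{}"] by simp
  moreover have "u = (\<lambda>_. 0)" if "u {} = 0"
    using that scalars(1) by (intro ext) metis
  moreover have "v = (\<lambda>_. 0)" if "v {} = 0"
    using that scalars(2) by (intro ext) metis
  ultimately show "u = (\<lambda>_. 0) \<or> v = (\<lambda>_. 0)"
    by blast
qed

lemma biquat_eps_nonzero: "biquat_eps i j \<noteq> (0::'a::idom)"
  by (simp add: biquat_eps_def)

lemma prod_biquat_eps_nonzero:
  "(\<Prod>i\<in>A. biquat_eps i j) \<noteq> (0::'a::idom)" "(\<Prod>j\<in>A. biquat_eps i j) \<noteq> (0::'a::idom)"
  by (cases "finite A"; simp add: prod_zero_iff biquat_eps_nonzero)+

lemma twist_left_eq_0_iff: "twist_left m biquat_eps c = (\<lambda>_. 0) \<longleftrightarrow> c = (\<lambda>_. 0::'a::idom)"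
  by (simp add: twist_left_def fun_eq_iff prod_biquat_eps_nonzero)

lemma twist_right_eq_0_iff: "twist_right m biquat_eps c = (\<lambda>_. 0) \<longleftrightarrow> c = (\<lambda>_. 0::'a::idom)"
  by (simp add: twist_right_def fun_eq_iff prod_biquat_eps_nonzero)

lemma strip_gen_eq_0_iff:
  assumes "odd_in m a"
  shows "strip_gen m a = (\<lambda>_. 0) \<longleftrightarrow> a = (\<lambda>_. 0)"
proof
  assume strip: "strip_gen m a = (\<lambda>_. 0)"
  show "a = (\<lambda>_. 0)"
  proof
    fix S show "a S = 0"
    proof (cases "m \<in> S")
      case True
      then have "a S = strip_gen m a (S - {m})" by (simp add: strip_gen_def insert_absorb)
      then show ?thesis using strip by simp
    qed (use assms in \<open>simp add: odd_in_def\<close>)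
  qed
qed (simp add: strip_gen_def)

lemma primitive_decomposition:
  fixes u :: "nat set \<Rightarrow> 'a::idom"
  assumes finite_valuation: "\<And>r. r \<noteq> 0 \<Longrightarrow> \<exists>N. \<not> p ^ N dvd r" and "u \<noteq> (\<lambda>_. 0)"
  obtains k u' where "u = (\<lambda>S. p ^ k * u' S)" and "\<not> (\<forall>S. p dvd u' S)"
proof -
  obtain S0 where "u S0 \<noteq> 0" using assms(2) by blast
  then obtain N where N: "\<not> p ^ N dvd u S0" using finite_valuation by blast
  let ?K = "{k. \<forall>S. p ^ k dvd u S}"
  have "?K \<subseteq> {..<N}"
  proof
    fix k assume "k \<in> ?K"
    then have "p ^ k dvd u S0" by simp
    then show "k \<in> {..<N}" using N le_imp_power_dvd dvd_trans by (metis lessThan_iff not_less)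
  qed
  then have fin: "finite ?K" by (rule finite_subset) simp
  define k where "k = Max ?K"
  have "0 \<in> ?K" by simp
  then have "k \<in> ?K" unfolding k_def using fin by (metis Max_in empty_iff)
  then have "\<forall>S. \<exists>c. u S = p ^ k * c" by (auto simp: dvd_def)
  then have "\<exists>u'. \<forall>S. u S = p ^ k * u' S" by (rule choice)
  then obtain u' where u': "\<forall>S. u S = p ^ k * u' S" by blast
  have "\<not> (\<forall>S. p dvd u' S)"
  proof
    assume "\<forall>S. p dvd u' S"
    then have "Suc k \<in> ?K" by (simp add: u' mult_dvd_mono)
    then have "Suc k \<le> k" unfolding k_def by (rule Max_ge[OF fin])
    then show False by simp
  qed
  then show thesis using that[of k u'] u' by blast
qed

text \<open>The generator \<open>g\<^sub>m\<close> is ramified at \<open>p\<close>, which generates the kernel of the reduction \<open>h\<close>: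
  the square of \<open>g\<^sub>m\<close> has valuation exactly one.\<close>

locale ramified_reduction =
  fixes h :: "'a::idom \<Rightarrow> 'b::idom" and sq :: "nat \<Rightarrow> 'a" and n m :: nat and J :: "nat set"
    and p w :: 'a
  assumes hom: "is_ring_hom h"
    and kernel: "\<And>r. h r = 0 \<Longrightarrow> p dvd r"
    and p_nonzero: "p \<noteq> 0" and hom_p: "h p = 0"
    and sq_m: "sq m = p * w" and hom_w: "h w \<noteq> 0"
    and m_in_J: "m \<in> J" and J_bound: "J \<subseteq> {..<n}"
    and residue_free: "zero_divisor_free n (h \<circ> sq) (J - {m})"
begin

abbreviation mult where "mult \<equiv> gen_mult n sq biquat_eps"

abbreviation mult_res where "mult_res \<equiv> gen_mult n (h \<circ> sq) biquat_eps"

lemmas hom_simps = ring_hom_zero[OF hom] ring_hom_add[OF hom] ring_hom_mult[OF hom]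
  ring_hom_gen_mult[OF hom] ring_hom_comp_even_part[OF hom] ring_hom_comp_odd_part[OF hom]
  ring_hom_comp_strip_gen[OF hom] ring_hom_comp_twist_left[OF hom] ring_hom_comp_twist_right[OF hom]

lemma m_less_n: "m < n"
  using m_in_J J_bound by auto

lemma in_subalgebra_res: "in_subalgebra I x \<Longrightarrow> in_subalgebra I (h \<circ> x)"
  using in_subalgebra_comp ring_hom_zero[OF hom] by blast

lemma even_part_dvd:
  assumes "even_part m (h \<circ> u) = (\<lambda>_. 0)"
  obtains u' where "even_part m u = (\<lambda>S. p * u' S)"
proof -
  have "\<forall>S. \<exists>c. even_part m u S = p * c"
    using kernel fun_cong[OF assms] by (auto simp: dvd_def simp flip: hom_simps)
  then have "\<exists>u'. \<forall>S. even_part m u S = p * u' S" by (rule choice)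
  then obtain u' where "\<forall>S. even_part m u S = p * u' S" by blast
  then show thesis
    using that[of u'] by (simp add: fun_eq_iff)
qed

context
  fixes u v :: "nat set \<Rightarrow> 'a"
  assumes u: "in_subalgebra J u" and v: "in_subalgebra J v" and uv: "mult u v = (\<lambda>_. 0)"
begin

lemma residue_even_parts_product: "mult_res (even_part m (h \<circ> u)) (even_part m (h \<circ> v)) = (\<lambda>_. 0)"
proof
  fix U show "mult_res (even_part m (h \<circ> u)) (even_part m (h \<circ> v)) U = 0"
  proof (cases "m \<in> U")
    case True
    then show ?thesis by (rule gen_mult_parity_mismatch(1)[OF even_in_even_part even_in_even_part])
  next
    case False
    text \<open>The product of the odd parts is a multiple of \<open>sq m\<close>, hence vanishes modulo \<open>p\<close>.\<close>
    have "h (mult (odd_part m u) (odd_part m v) U) = 0"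
      by (simp add: gen_mult_odd_odd[OF odd_in_odd_part odd_in_odd_part m_less_n False] sq_m hom_simps hom_p)
    moreover have "h (mult (even_part m u) (even_part m v) U + mult (odd_part m u) (odd_part m v) U) = 0"
      by (simp add: gen_mult_eq_0_parts(1)[OF uv False] hom_simps)
    ultimately show ?thesis by (simp add: hom_simps)
  qed
qed

lemma residue_odd_relation:
  assumes "m \<in> U"
  shows "mult_res (even_part m (h \<circ> u)) (odd_part m (h \<circ> v)) U +
    mult_res (odd_part m (h \<circ> u)) (even_part m (h \<circ> v)) U = 0"
proof -
  have "h (mult (even_part m u) (odd_part m v) U + mult (odd_part m u) (even_part m v) U) = 0"
    by (simp add: gen_mult_eq_0_parts(2)[OF uv assms] hom_simps)
  then show ?thesis by (simp add: hom_simps)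
qed

lemma residue_even_part_left:
  assumes v_even: "even_part m (h \<circ> v) = (\<lambda>_. 0)" and v_res: "h \<circ> v \<noteq> (\<lambda>_. 0)"
  shows "even_part m (h \<circ> u) = (\<lambda>_. 0)"
proof -
  let ?a = "even_part m (h \<circ> u)" and ?b = "odd_part m (h \<circ> v)"
  have "mult_res (twist_right m biquat_eps ?a) (strip_gen m ?b) = (\<lambda>_. 0)"
  proof
    fix U show "mult_res (twist_right m biquat_eps ?a) (strip_gen m ?b) U = 0"
    proof (cases "m \<in> U")
      case True
      then show ?thesis
        by (rule gen_mult_parity_mismatch(1)[OF even_in_twist_right[OF even_in_even_part] even_in_strip_gen])
    next
      case False
      have "mult_res ?a ?b (insert m U) = 0"
        using residue_odd_relation[of "insert m U"] v_even by (simp add: gen_mult_zero_right)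
      then show ?thesis by (simp add: gen_mult_odd_right[OF odd_in_odd_part even_in_even_part m_less_n False])
    qed
  qed
  moreover have "in_subalgebra (J - {m}) (twist_right m biquat_eps ?a)" "in_subalgebra (J - {m}) (strip_gen m ?b)"
    by (simp_all add: in_subalgebra_twist_right in_subalgebra_even_part in_subalgebra_strip_gen
        in_subalgebra_odd_part in_subalgebra_res u v)
  ultimately have "twist_right m biquat_eps ?a = (\<lambda>_. 0) \<or> strip_gen m ?b = (\<lambda>_. 0)"
    using zero_divisor_freeD[OF residue_free] by blast
  moreover have "?b \<noteq> (\<lambda>_. 0)" using v_even v_res even_odd_parts_eq_0 by blast
  ultimately show ?thesis by (simp add: twist_right_eq_0_iff strip_gen_eq_0_iff[OF odd_in_odd_part])
qed

lemma residue_even_part_right: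
  assumes u_even: "even_part m (h \<circ> u) = (\<lambda>_. 0)" and u_res: "h \<circ> u \<noteq> (\<lambda>_. 0)"
  shows "even_part m (h \<circ> v) = (\<lambda>_. 0)"
proof -
  let ?a = "odd_part m (h \<circ> u)" and ?b = "even_part m (h \<circ> v)"
  have "mult_res (strip_gen m ?a) (twist_left m biquat_eps ?b) = (\<lambda>_. 0)"
  proof
    fix U show "mult_res (strip_gen m ?a) (twist_left m biquat_eps ?b) U = 0"
    proof (cases "m \<in> U")
      case True
      then show ?thesis
        by (rule gen_mult_parity_mismatch(1)[OF even_in_strip_gen even_in_twist_left[OF even_in_even_part]])
    next
      case False
      have "mult_res ?a ?b (insert m U) = 0"
        using residue_odd_relation[of "insert m U"] u_even by (simp add: gen_mult_zero_left)
      then show ?thesis by (simp add: gen_mult_odd_left[OF odd_in_odd_part m_less_n False])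
    qed
  qed
  moreover have "in_subalgebra (J - {m}) (strip_gen m ?a)" "in_subalgebra (J - {m}) (twist_left m biquat_eps ?b)"
    by (simp_all add: in_subalgebra_twist_left in_subalgebra_even_part in_subalgebra_strip_gen
        in_subalgebra_odd_part in_subalgebra_res u v)
  ultimately have "strip_gen m ?a = (\<lambda>_. 0) \<or> twist_left m biquat_eps ?b = (\<lambda>_. 0)"
    using zero_divisor_freeD[OF residue_free] by blast
  moreover have "?a \<noteq> (\<lambda>_. 0)" using u_even u_res even_odd_parts_eq_0 by blast
  ultimately show ?thesis by (simp add: twist_left_eq_0_iff strip_gen_eq_0_iff[OF odd_in_odd_part])
qed

lemma residue_even_parts_zero:
  assumes "h \<circ> u \<noteq> (\<lambda>_. 0)" "h \<circ> v \<noteq> (\<lambda>_. 0)"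
  shows "even_part m (h \<circ> u) = (\<lambda>_. 0)" "even_part m (h \<circ> v) = (\<lambda>_. 0)"
proof -
  have "even_part m (h \<circ> u) = (\<lambda>_. 0) \<or> even_part m (h \<circ> v) = (\<lambda>_. 0)"
    using zero_divisor_freeD[OF residue_free _ _ residue_even_parts_product]
    by (simp add: in_subalgebra_even_part in_subalgebra_res u v)
  then show "even_part m (h \<circ> u) = (\<lambda>_. 0)" "even_part m (h \<circ> v) = (\<lambda>_. 0)"
    using residue_even_part_left residue_even_part_right assms by blast+
qed

lemma residue_odd_parts_product:
  assumes u_even: "even_part m (h \<circ> u) = (\<lambda>_. 0)" and v_even: "even_part m (h \<circ> v) = (\<lambda>_. 0)"
  shows "odd_part m (h \<circ> u) = (\<lambda>_. 0) \<or> odd_part m (h \<circ> v) = (\<lambda>_. 0)"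
proof -
  obtain u' where u': "even_part m u = (\<lambda>S. p * u' S)" using even_part_dvd u_even by blast
  obtain v' where v': "even_part m v = (\<lambda>S. p * v' S)" using even_part_dvd v_even by blast
  let ?a = "twist_right m biquat_eps (strip_gen m (odd_part m u))"
    and ?b = "twist_left m biquat_eps (strip_gen m (odd_part m v))"
  have "h (mult ?a ?b U) = 0" for U
  proof (cases "m \<in> U")
    case True
    have "mult ?a ?b U = 0"
      by (rule gen_mult_parity_mismatch(1)[OF even_in_twist_right[OF even_in_strip_gen]
            even_in_twist_left[OF even_in_strip_gen] True])
    then show ?thesis by (simp add: ring_hom_zero[OF hom])
  next
    case False
    text \<open>Both even parts are divisible by \<open>p\<close>; cancelling one factor \<open>p\<close> from the even part of
      \<open>u v = 0\<close> leaves \<open>w\<close> times the reduced product of the odd parts.\<close>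
    have "p * (p * mult u' v' U + w * mult ?a ?b U) = 0"
      using gen_mult_eq_0_parts(1)[OF uv False]
      by (simp add: u' v' gen_mult_odd_odd[OF odd_in_odd_part odd_in_odd_part m_less_n False] sq_m
          gen_mult_scale_left gen_mult_scale_right algebra_simps)
    then have "h (p * mult u' v' U + w * mult ?a ?b U) = 0"
      using p_nonzero by (simp add: hom_simps)
    then show ?thesis using hom_w by (simp add: hom_simps hom_p)
  qed
  then have "mult_res (h \<circ> ?a) (h \<circ> ?b) = (\<lambda>_. 0)"
    by (simp add: fun_eq_iff flip: hom_simps)
  moreover have "in_subalgebra (J - {m}) (h \<circ> ?a)" "in_subalgebra (J - {m}) (h \<circ> ?b)"
    by (simp_all add: in_subalgebra_twist_left in_subalgebra_twist_right in_subalgebra_strip_gen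
        in_subalgebra_odd_part in_subalgebra_res u v)
  ultimately have "h \<circ> ?a = (\<lambda>_. 0) \<or> h \<circ> ?b = (\<lambda>_. 0)"
    using zero_divisor_freeD[OF residue_free] by blast
  then show ?thesis
    by (simp add: hom_simps twist_left_eq_0_iff twist_right_eq_0_iff strip_gen_eq_0_iff[OF odd_in_odd_part])
qed

lemma residue_zero: "h \<circ> u = (\<lambda>_. 0) \<or> h \<circ> v = (\<lambda>_. 0)"
proof (rule ccontr)
  assume "\<not> ?thesis"
  then have res: "h \<circ> u \<noteq> (\<lambda>_. 0)" "h \<circ> v \<noteq> (\<lambda>_. 0)" by auto
  with residue_odd_parts_product residue_even_parts_zero[OF res] show False
    using even_odd_parts_eq_0 by metis
qed

end

lemma zero_divisor_free:
  assumes finite_valuation: "\<And>r. r \<noteq> 0 \<Longrightarrow> \<exists>N. \<not> p ^ N dvd r"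
  shows "zero_divisor_free n sq J"
  unfolding zero_divisor_free_def
proof (intro allI impI)
  fix u v assume u: "in_subalgebra J u" and v: "in_subalgebra J v" and uv: "mult u v = (\<lambda>_. 0)"
  show "u = (\<lambda>_. 0) \<or> v = (\<lambda>_. 0)"
  proof (rule ccontr)
    assume "\<not> ?thesis"
    then obtain k u' l v' where u': "u = (\<lambda>S. p ^ k * u' S)" "\<not> (\<forall>S. p dvd u' S)"
      and v': "v = (\<lambda>S. p ^ l * v' S)" "\<not> (\<forall>S. p dvd v' S)"
      using primitive_decomposition[OF finite_valuation] by metis
    have "in_subalgebra J u'" "in_subalgebra J v'"
      using u v p_nonzero by (simp_all add: u' v' in_subalgebra_def)
    moreover have "mult u' v' = (\<lambda>_. 0)"
      using uv p_nonzero by (simp add: u' v' fun_eq_iff gen_mult_scale_left gen_mult_scale_right)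
    ultimately have "h \<circ> u' = (\<lambda>_. 0) \<or> h \<circ> v' = (\<lambda>_. 0)"
      by (rule residue_zero)
    moreover have "h \<circ> u' \<noteq> (\<lambda>_. 0)" "h \<circ> v' \<noteq> (\<lambda>_. 0)"
      using u'(2) v'(2) kernel by (auto simp: fun_eq_iff)
    ultimately show False
      by blast
  qed
qed

end

section \<open>The algebra over \<open>\<rat>[t\<^sub>1,t\<^sub>2,t\<^sub>3,t\<^sub>4][x]\<close>\<close>

lemma dvd_of_coeffs_at_0_eq_0:
  fixes r :: "'a::idom poly poly"
  assumes "map_poly (\<lambda>c. poly c 0) r = 0"
  shows "[:[:0, 1:]:] dvd r"
proof -
  have "[:0, 1:] dvd coeff r i" for i
    using arg_cong[OF assms, of "\<lambda>q. coeff q i"] by (simp add: coeff_map_poly poly_eq_0_iff_dvd)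
  then show ?thesis by (simp add: const_poly_dvd_iff)
qed

lemma exists_not_power_dvd_const_X:
  fixes r :: "'a::idom poly poly"
  assumes "r \<noteq> 0"
  shows "\<exists>N. \<not> [:[:0, 1:]:] ^ N dvd r"
proof -
  obtain i where i: "coeff r i \<noteq> 0" using assms by (metis leading_coeff_0_iff)
  have "\<not> [:[:0, 1:]:] ^ Suc (degree (coeff r i)) dvd r"
  proof
    assume "[:[:0, 1:]:] ^ Suc (degree (coeff r i)) dvd r"
    then have "[:0, 1:] ^ Suc (degree (coeff r i)) dvd coeff r i"
      by (simp add: const_poly_dvd_iff poly_const_pow)
    from dvd_imp_degree_le[OF this i] show False by (simp add: degree_power_eq)
  qed
  then show ?thesis by blast
qed

lemma exists_not_power_dvd_linear:
  fixes r :: "'a::idom poly"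
  assumes "r \<noteq> 0"
  shows "\<exists>N. \<not> [:a, 1:] ^ N dvd r"
proof -
  have "\<not> [:a, 1:] ^ Suc (degree r) dvd r"
  proof
    assume "[:a, 1:] ^ Suc (degree r) dvd r"
    from dvd_imp_degree_le[OF this assms] show False by (simp only: degree_linear_power)
  qed
  then show ?thesis by blast
qed

definition T1 :: "rat poly poly poly poly" where "T1 = [:[:[:[:0, 1:]:]:]:]"
definition T2 :: "rat poly poly poly poly" where "T2 = [:[:[:0, 1:]:]:]"
definition T3 :: "rat poly poly poly poly" where "T3 = [:[:0, 1:]:]"
definition T4 :: "rat poly poly poly poly" where "T4 = [:0, 1:]"

definition sq_poly :: "nat \<Rightarrow> rat poly poly poly poly poly" where
  "sq_poly i = (if i = 0 then [:0, 1:] else if i = 1 then [:T3:] else if i = 2 then [:- T1, 1:]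
     else if i = 3 then [:T4:] else [:0, 1:] * [:- T1, 1:] * [:- T2, 1:])"

text \<open>Each specialisation kills one generator: \<open>t\<^sub>4 := 0\<close> and \<open>t\<^sub>3 := 0\<close> the generators \<open>j\<^sub>2\<close>
  and \<open>j\<^sub>1\<close>, \<open>x := t\<^sub>2\<close> the generator \<open>y\<close>, and then \<open>t\<^sub>2 := 0\<close> and \<open>t\<^sub>1 := 0\<close> the generators
  \<open>i\<^sub>1\<close> and \<open>i\<^sub>2\<close>, whose squares have become \<open>t\<^sub>2\<close> and \<open>t\<^sub>2 - t\<^sub>1\<close>.\<close>

definition "sq_t4_0 = map_poly (\<lambda>c. poly c 0) \<circ> sq_poly"
definition "sq_t3_0 = map_poly (\<lambda>c. poly c 0) \<circ> sq_t4_0"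
definition "sq_x_t2 = (\<lambda>r. poly r [:0, 1:]) \<circ> sq_t3_0"
definition "sq_t2_0 = (\<lambda>r. poly r 0) \<circ> sq_x_t2"

lemma map_poly_coeffs_at_0_pCons:
  "map_poly (\<lambda>c. poly c 0) (pCons a p) = pCons (poly a 0) (map_poly (\<lambda>c. poly c 0) p)"
  by (rule map_poly_pCons) simp

lemma sq_poly_3: "sq_poly 3 = [:[:0, 1:]:] * 1"
  by (simp add: sq_poly_def T4_def)

lemma sq_t4_0_1: "sq_t4_0 1 = [:[:0, 1:]:] * 1"
  by (simp add: sq_t4_0_def sq_poly_def map_poly_coeffs_at_0_pCons T3_def)

lemma sq_t3_0_4: "sq_t3_0 4 = [:- [:0, 1:], 1:] * ([:0, 1:] * [:- [:[:0, 1:]:], 1:])"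
  by (simp add: sq_t3_0_def sq_t4_0_def sq_poly_def map_poly_coeffs_at_0_pCons T1_def T2_def
      ring_hom_mult[OF is_ring_hom_map_poly[OF is_ring_hom_poly]] ac_simps)

lemma sq_x_t2_0: "sq_x_t2 0 = [:0, 1:] * 1"
  by (simp add: sq_x_t2_def sq_t3_0_def sq_t4_0_def sq_poly_def map_poly_coeffs_at_0_pCons)

lemma sq_t2_0_2: "sq_t2_0 2 = [:0, 1:] * - 1"
  by (simp add: sq_t2_0_def sq_x_t2_def sq_t3_0_def sq_t4_0_def sq_poly_def map_poly_coeffs_at_0_pCons T1_def)

lemma zero_divisor_free_t2_0: "zero_divisor_free 5 sq_t2_0 {2}"
proof (rule ramified_reduction.zero_divisor_free)
  have "zero_divisor_free 5 ((\<lambda>r. poly r 0) \<circ> sq_t2_0) ({2} - {2})"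
    by (simp add: zero_divisor_free_empty)
  then show "ramified_reduction (\<lambda>r. poly r 0) sq_t2_0 5 2 {2} [:0, 1:] (- 1)"
    by unfold_locales (simp_all add: is_ring_hom_poly poly_eq_0_iff_dvd sq_t2_0_2)
qed (rule exists_not_power_dvd_linear)

lemma zero_divisor_free_x_t2: "zero_divisor_free 5 sq_x_t2 {0, 2}"
proof (rule ramified_reduction.zero_divisor_free)
  have "zero_divisor_free 5 ((\<lambda>r. poly r 0) \<circ> sq_x_t2) ({0, 2} - {0})"
    using zero_divisor_free_t2_0 by (simp add: sq_t2_0_def)
  then show "ramified_reduction (\<lambda>r. poly r 0) sq_x_t2 5 0 {0, 2} [:0, 1:] 1"
    by unfold_locales (simp_all add: is_ring_hom_poly poly_eq_0_iff_dvd sq_x_t2_0)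
qed (rule exists_not_power_dvd_linear)

lemma zero_divisor_free_t3_0: "zero_divisor_free 5 sq_t3_0 {0, 2, 4}"
proof (rule ramified_reduction.zero_divisor_free)
  have "zero_divisor_free 5 ((\<lambda>r. poly r [:0, 1:]) \<circ> sq_t3_0) ({0, 2, 4} - {4})"
    using zero_divisor_free_x_t2 by (simp add: sq_x_t2_def insert_Diff_if)
  then show "ramified_reduction (\<lambda>r. poly r [:0, 1:]) sq_t3_0 5 4 {0, 2, 4} [:- [:0, 1:], 1:]
      ([:0, 1:] * [:- [:[:0, 1:]:], 1:])"
    by unfold_locales (simp_all add: is_ring_hom_poly poly_eq_0_iff_dvd sq_t3_0_4)
qed (rule exists_not_power_dvd_linear)

lemma zero_divisor_free_t4_0: "zero_divisor_free 5 sq_t4_0 {0, 1, 2, 4}"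
proof (rule ramified_reduction.zero_divisor_free)
  have "zero_divisor_free 5 (map_poly (\<lambda>c. poly c 0) \<circ> sq_t4_0) ({0, 1, 2, 4} - {1})"
    using zero_divisor_free_t3_0 by (simp add: sq_t3_0_def insert_Diff_if)
  then show "ramified_reduction (map_poly (\<lambda>c. poly c 0)) sq_t4_0 5 1 {0, 1, 2, 4} [:[:0, 1:]:] 1"
    by unfold_locales (simp_all add: is_ring_hom_map_poly is_ring_hom_poly dvd_of_coeffs_at_0_eq_0
        map_poly_coeffs_at_0_pCons sq_t4_0_1[unfolded One_nat_def])
qed (rule exists_not_power_dvd_const_X)

lemma zero_divisor_free_poly: "zero_divisor_free 5 sq_poly {..<5}"
proof (rule ramified_reduction.zero_divisor_free)
  have "{..<5} - {3} = {0, 1, 2, 4::nat}" by auto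
  then have "zero_divisor_free 5 (map_poly (\<lambda>c. poly c 0) \<circ> sq_poly) ({..<5} - {3})"
    using zero_divisor_free_t4_0 by (simp add: sq_t4_0_def)
  then show "ramified_reduction (map_poly (\<lambda>c. poly c 0)) sq_poly 5 3 {..<5} [:[:0, 1:]:] 1"
    by unfold_locales (simp_all add: is_ring_hom_map_poly is_ring_hom_poly dvd_of_coeffs_at_0_eq_0
        map_poly_coeffs_at_0_pCons sq_poly_3)
qed (rule exists_not_power_dvd_const_X)

section \<open>Passing to the field of fractions\<close>

context
  fixes h :: "'a::idom \<Rightarrow> 'b::idom"
  assumes hom: "is_ring_hom h"
    and injective: "\<And>r. h r = 0 \<Longrightarrow> r = 0"
    and fraction: "\<And>a. \<exists>d r. d \<noteq> 0 \<and> h d * a = h r"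
begin

lemma common_denominator:
  assumes "finite A"
  shows "\<exists>D f'. D \<noteq> 0 \<and> (\<forall>S\<in>A. h D * f S = h (f' S))"
  using assms
proof (induct A rule: finite_induct)
  case empty
  show ?case by (rule exI[of _ 1]) simp
next
  case (insert S A)
  then obtain D f' where D: "D \<noteq> 0" and f': "\<forall>T\<in>A. h D * f T = h (f' T)" by blast
  obtain d r where d: "d \<noteq> 0" and r: "h d * f S = h r" using fraction by blast
  have "\<forall>T\<in>insert S A. h (D * d) * f T = h (if T = S then D * r else d * f' T)"
    using r f' by (auto simp: ring_hom_mult[OF hom] algebra_simps)
  moreover have "D * d \<noteq> 0" using D d by simp
  ultimately show ?case
    by (intro exI[of _ "D * d"] exI[of _ "\<lambda>T. if T = S then D * r else d * f' T"]) simp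
qed

lemma clear_denominators:
  assumes "finite J" and "in_subalgebra J u"
  obtains D u' where "D \<noteq> 0" "in_subalgebra J u'" "h \<circ> u' = (\<lambda>S. h D * u S)"
proof -
  obtain D f' where D: "D \<noteq> 0" and f': "\<forall>S\<in>Pow J. h D * u S = h (f' S)"
    using common_denominator[of "Pow J" u] assms(1) by auto
  let ?u' = "\<lambda>S. if S \<subseteq> J then f' S else 0"
  have "in_subalgebra J ?u'" by (simp add: in_subalgebra_def)
  moreover have "h \<circ> ?u' = (\<lambda>S. h D * u S)"
    using f' assms(2) by (auto simp: in_subalgebra_def ring_hom_zero[OF hom])
  ultimately show thesis using D that by blast
qed

lemma zero_divisor_free_fractions:
  assumes "finite J" and "zero_divisor_free n sq J"
  shows "zero_divisor_free n (h \<circ> sq) J"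
  unfolding zero_divisor_free_def
proof (intro allI impI)
  fix u v assume u: "in_subalgebra J u" and v: "in_subalgebra J v"
    and uv: "gen_mult n (h \<circ> sq) biquat_eps u v = (\<lambda>_. 0)"
  obtain D u' where D: "D \<noteq> 0" and u': "in_subalgebra J u'" "h \<circ> u' = (\<lambda>S. h D * u S)"
    using clear_denominators[OF assms(1) u] by blast
  obtain E v' where E: "E \<noteq> 0" and v': "in_subalgebra J v'" "h \<circ> v' = (\<lambda>S. h E * v S)"
    using clear_denominators[OF assms(1) v] by blast
  have "h (gen_mult n sq biquat_eps u' v' U) = 0" for U
    using fun_cong[OF uv, of U]
    by (simp add: ring_hom_gen_mult[OF hom] u'(2) v'(2) gen_mult_scale_left gen_mult_scale_right)
  then have "gen_mult n sq biquat_eps u' v' = (\<lambda>_. 0)"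
    using injective by blast
  then have "u' = (\<lambda>_. 0) \<or> v' = (\<lambda>_. 0)"
    using zero_divisor_freeD[OF assms(2) u'(1) v'(1)] by blast
  moreover have "u = (\<lambda>_. 0)" if "u' = (\<lambda>_. 0)"
  proof
    fix S
    have "h D * u S = 0" using fun_cong[OF u'(2), of S] that by (simp add: ring_hom_zero[OF hom])
    then show "u S = 0" using D injective by auto
  qed
  moreover have "v = (\<lambda>_. 0)" if "v' = (\<lambda>_. 0)"
  proof
    fix S
    have "h E * v S = 0" using fun_cong[OF v'(2), of S] that by (simp add: ring_hom_zero[OF hom])
    then show "v S = 0" using E injective by auto
  qed
  ultimately show "u = (\<lambda>_. 0) \<or> v = (\<lambda>_. 0)"
    by blast
qed

end

lemma is_ring_hom_Fract: "is_ring_hom (\<lambda>r::'a::idom. Fract r 1)"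
  by (simp add: is_ring_hom_def One_fract_def)

lemma Fract_1_eq_0_iff: "Fract (r::'a::idom) 1 = 0 \<longleftrightarrow> r = 0"
  by (simp add: Zero_fract_def eq_fract)

lemma map_poly_Fract_pCons:
  "map_poly (\<lambda>r. Fract r 1) (pCons a p) = pCons (Fract (a::'a::idom) 1) (map_poly (\<lambda>r. Fract r 1) p)"
  by (rule map_poly_pCons) (simp add: Zero_fract_def)

lemma map_poly_Fract_smult:
  "map_poly (\<lambda>r. Fract (r::'a::idom) 1) (smult c p) = smult (Fract c 1) (map_poly (\<lambda>r. Fract r 1) p)"
  by (rule poly_eqI) (simp add: coeff_map_poly Zero_fract_def[symmetric])

lemma poly_clear_denominators:
  fixes p :: "'a::idom fract poly"
  shows "\<exists>e P. e \<noteq> 0 \<and> smult (Fract e 1) p = map_poly (\<lambda>r. Fract r 1) P"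
proof (induct p)
  case 0
  show ?case by (intro exI[of _ 1] exI[of _ 0]) simp
next
  case (pCons a p)
  then obtain e P where e: "e \<noteq> 0" and P: "smult (Fract e 1) p = map_poly (\<lambda>r. Fract r 1) P"
    by blast
  obtain x y where a: "a = Fract x y" and y: "y \<noteq> 0" by (cases a) blast
  have "Fract (y * e) 1 * a = Fract (e * x) 1"
    using y by (simp add: a eq_fract algebra_simps)
  moreover have "smult (Fract (y * e) 1) p = map_poly (\<lambda>r. Fract r 1) (smult y P)"
    by (simp add: map_poly_Fract_smult flip: P)
  ultimately have "smult (Fract (y * e) 1) (pCons a p) =
      map_poly (\<lambda>r. Fract r 1) (pCons (e * x) (smult y P))"
    by (simp add: map_poly_Fract_pCons)
  moreover have "y * e \<noteq> 0" using e y by simp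
  ultimately show ?case by blast
qed

definition to_kx :: "rat poly poly poly poly poly \<Rightarrow> kx" where
  "to_kx p = Fract (map_poly (\<lambda>r. Fract r 1) p) 1"

lemma is_ring_hom_to_kx: "is_ring_hom to_kx"
proof -
  have "to_kx = (\<lambda>q. Fract q 1) \<circ> map_poly (\<lambda>r. Fract r 1)"
    by (auto simp: to_kx_def)
  then show ?thesis
    by (metis is_ring_hom_comp is_ring_hom_map_poly is_ring_hom_Fract)
qed

lemma to_kx_eq_0_iff: "to_kx p = 0 \<longleftrightarrow> p = 0"
  by (simp add: to_kx_def Fract_1_eq_0_iff map_poly_eq_0_iff Zero_fract_def[symmetric])

lemma kx_fraction: "\<exists>d r. d \<noteq> 0 \<and> to_kx d * a = to_kx r"
proof -
  obtain P Q where a: "a = Fract P Q" and Q: "Q \<noteq> 0" by (cases a) blast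
  obtain e1 P1 where e1: "e1 \<noteq> 0" and P1: "smult (Fract e1 1) P = map_poly (\<lambda>r. Fract r 1) P1"
    using poly_clear_denominators by blast
  obtain e2 Q1 where e2: "e2 \<noteq> 0" and Q1: "smult (Fract e2 1) Q = map_poly (\<lambda>r. Fract r 1) Q1"
    using poly_clear_denominators by blast
  have P: "map_poly (\<lambda>r. Fract r 1) (smult e2 P1) = smult (Fract (e1 * e2) 1) P"
    by (simp add: map_poly_Fract_smult mult.commute flip: P1)
  have Q': "map_poly (\<lambda>r. Fract r 1) (smult e1 Q1) = smult (Fract (e1 * e2) 1) Q"
    by (simp add: map_poly_Fract_smult flip: Q1)
  have "Fract (e1 * e2) 1 \<noteq> 0" using e1 e2 by (simp add: Fract_1_eq_0_iff)
  then have "smult e1 Q1 \<noteq> 0"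
    using Q Q' map_poly_eq_0_iff[of "\<lambda>r. Fract r 1"] by (auto simp: Zero_fract_def[symmetric])
  moreover have "to_kx (smult e1 Q1) * a = to_kx (smult e2 P1)"
    unfolding to_kx_def a P Q' using Q by (simp add: eq_fract algebra_simps)
  ultimately show ?thesis by blast
qed

definition sq_kx :: "nat \<Rightarrow> kx" where "sq_kx = to_kx \<circ> sq_poly"

lemma to_kx_X: "to_kx [:0, 1:] = xvar"
  by (simp add: to_kx_def xvar_def map_poly_Fract_pCons Zero_fract_def[symmetric] One_fract_def[symmetric])

lemma to_kx_const: "to_kx [:c:] = const_kx (Fract c 1)"
  by (simp add: to_kx_def const_kx_def map_poly_Fract_pCons)

lemma to_kx_linear: "to_kx [:- c, 1:] = xvar - const_kx (Fract c 1)"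
proof -
  have "[:- c, 1:] = [:0, 1:] + - [:c:]" by simp
  then show ?thesis
    by (simp only: ring_hom_add[OF is_ring_hom_to_kx] ring_hom_uminus[OF is_ring_hom_to_kx] to_kx_X
        to_kx_const diff_conv_add_uminus)
qed

lemma Fract_T: "Fract T1 1 = t1" "Fract T2 1 = t2" "Fract T3 1 = t3" "Fract T4 1 = t4"
  by (simp_all add: T1_def T2_def T3_def T4_def t1_def t2_def t3_def t4_def)

lemma sq_kx_simps:
  "sq_kx 0 = xvar" "sq_kx 1 = const_kx t3" "sq_kx 2 = xvar - const_kx t1" "sq_kx 3 = const_kx t4"
  "sq_kx 4 = cubic"
proof -
  show "sq_kx 0 = xvar" "sq_kx 1 = const_kx t3" "sq_kx 2 = xvar - const_kx t1" "sq_kx 3 = const_kx t4"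
    by (simp_all add: sq_kx_def sq_poly_def to_kx_X to_kx_const to_kx_linear Fract_T)
  have "(4::nat) \<noteq> 0" "(4::nat) \<noteq> 1" "(4::nat) \<noteq> 2" "(4::nat) \<noteq> 3" by simp_all
  then have "sq_kx 4 = to_kx ([:0, 1:] * [:- T1, 1:] * [:- T2, 1:])"
    by (simp only: sq_kx_def sq_poly_def comp_apply if_False)
  then show "sq_kx 4 = cubic"
    by (simp only: ring_hom_mult[OF is_ring_hom_to_kx] to_kx_X to_kx_linear Fract_T cubic_def)
qed

lemma zero_divisor_free_kx: "zero_divisor_free 5 sq_kx {..<5}"
  unfolding sq_kx_def
  by (rule zero_divisor_free_fractions[OF is_ring_hom_to_kx _ kx_fraction])
    (simp_all add: to_kx_eq_0_iff zero_divisor_free_poly)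

section \<open>Associativity\<close>

lemma prod_sym_diff:
  fixes g :: "nat \<Rightarrow> 'a::comm_ring_1"
  assumes g: "\<And>i. g i * g i = 1" and "finite S" "finite S'"
  shows "prod g S * prod g S' = prod g (sym_diff S S')"
proof -
  have S: "prod g S = prod g (S - S') * prod g (S \<inter> S')"
    using assms by (subst prod.union_disjoint[symmetric]) (auto intro: prod.cong)
  have S': "prod g S' = prod g (S' - S) * prod g (S \<inter> S')"
    using assms by (subst prod.union_disjoint[symmetric]) (auto intro: prod.cong)
  have sym_diff: "prod g (sym_diff S S') = prod g (S - S') * prod g (S' - S)"
    using assms by (subst prod.union_disjoint) auto
  have "prod g (S \<inter> S') * prod g (S \<inter> S') = 1"
    by (simp add: g flip: prod.distrib)
  then show ?thesis
    unfolding S S' sym_diff by (simp add: algebra_simps)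
qed

definition anticomm_sign :: "nat set \<Rightarrow> nat set \<Rightarrow> 'a::comm_ring_1" where
  "anticomm_sign S T = (\<Prod>p\<in>{(i, j). i \<in> S \<and> j \<in> T \<and> j < i}. biquat_eps (fst p) (snd p))"

lemma monprod_biquat_eps: "monprod sq biquat_eps S T = anticomm_sign S T * (\<Prod>j\<in>S \<inter> T. sq j)"
  by (simp add: monprod_def anticomm_sign_def)

lemma anticomm_sign_iterated:
  assumes "finite S" "finite T"
  shows "anticomm_sign S T = (\<Prod>i\<in>S. \<Prod>j\<in>{j\<in>T. j < i}. (biquat_eps i j :: 'a::comm_ring_1))"
    and "anticomm_sign S T = (\<Prod>j\<in>T. \<Prod>i\<in>{i\<in>S. j < i}. (biquat_eps i j :: 'a::comm_ring_1))"
proof -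
  have "{(i, j). i \<in> S \<and> j \<in> T \<and> j < i} = Sigma S (\<lambda>i. {j\<in>T. j < i})" by auto
  then show "anticomm_sign S T = (\<Prod>i\<in>S. \<Prod>j\<in>{j\<in>T. j < i}. (biquat_eps i j :: 'a))"
    unfolding anticomm_sign_def using assms by (simp add: prod.Sigma case_prod_unfold)
  have "{(i, j). i \<in> S \<and> j \<in> T \<and> j < i} = (\<lambda>(j, i). (i, j)) ` Sigma T (\<lambda>j. {i\<in>S. j < i})"
    by auto
  moreover have "inj_on (\<lambda>(j, i). (i::nat, j::nat)) (Sigma T (\<lambda>j. {i\<in>S. j < i}))"
    by (auto simp: inj_on_def)
  ultimately show "anticomm_sign S T = (\<Prod>j\<in>T. \<Prod>i\<in>{i\<in>S. j < i}. (biquat_eps i j :: 'a))"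
    unfolding anticomm_sign_def using assms by (simp add: prod.reindex prod.Sigma case_prod_unfold)
qed

lemma biquat_eps_square: "biquat_eps i j * biquat_eps i j = (1::'a::comm_ring_1)"
  by (simp add: biquat_eps_def)

lemma prod_biquat_eps_square:
  "(\<Prod>x\<in>A. biquat_eps (f x) (g x)) * (\<Prod>x\<in>A. biquat_eps (f x) (g x)) = (1::'a::comm_ring_1)"
  by (simp add: biquat_eps_square flip: prod.distrib)

lemma anticomm_sign_sym_diff:
  assumes "finite S" "finite S'" "finite T" "finite T'"
  shows "anticomm_sign S T * anticomm_sign S' T = (anticomm_sign (sym_diff S S') T :: 'a::comm_ring_1)"
    and "anticomm_sign S T * anticomm_sign S T' = (anticomm_sign S (sym_diff T T') :: 'a::comm_ring_1)"
proof -
  have fin: "finite (sym_diff S S')" "finite (sym_diff T T')" using assms by auto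
  show "anticomm_sign S T * anticomm_sign S' T = (anticomm_sign (sym_diff S S') T :: 'a)"
    unfolding anticomm_sign_iterated(1)[OF assms(1,3)] anticomm_sign_iterated(1)[OF assms(2,3)]
      anticomm_sign_iterated(1)[OF fin(1) assms(3)]
    by (rule prod_sym_diff[OF _ assms(1,2)]) (rule prod_biquat_eps_square)
  show "anticomm_sign S T * anticomm_sign S T' = (anticomm_sign S (sym_diff T T') :: 'a)"
    unfolding anticomm_sign_iterated(2)[OF assms(1,3)] anticomm_sign_iterated(2)[OF assms(1,4)]
      anticomm_sign_iterated(2)[OF assms(1) fin(2)]
    by (rule prod_sym_diff[OF _ assms(3,4)]) (rule prod_biquat_eps_square)
qed

lemma prod_Int_sym_diff:
  fixes sq :: "nat \<Rightarrow> 'a::comm_monoid_mult"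
  assumes "finite S" "finite T" "finite R"
  shows "(\<Prod>j\<in>S \<inter> T. sq j) * (\<Prod>j\<in>sym_diff S T \<inter> R. sq j) =
    (\<Prod>j\<in>T \<inter> R. sq j) * (\<Prod>j\<in>S \<inter> sym_diff T R. sq j)"
proof -
  have "(\<Prod>j\<in>S \<inter> T. sq j) * (\<Prod>j\<in>sym_diff S T \<inter> R. sq j) = (\<Prod>j\<in>(S \<inter> T) \<union> (sym_diff S T \<inter> R). sq j)"
    using assms by (intro prod.union_disjoint[symmetric]) auto
  also have "(S \<inter> T) \<union> (sym_diff S T \<inter> R) = (T \<inter> R) \<union> (S \<inter> sym_diff T R)"
    by auto
  also have "(\<Prod>j\<in>(T \<inter> R) \<union> (S \<inter> sym_diff T R). sq j) = (\<Prod>j\<in>T \<inter> R. sq j) * (\<Prod>j\<in>S \<inter> sym_diff T R. sq j)"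
    using assms by (intro prod.union_disjoint) auto
  finally show ?thesis .
qed

lemma monprod_cocycle:
  fixes sq :: "nat \<Rightarrow> 'a::comm_ring_1"
  assumes "finite S" "finite T" "finite R"
  shows "monprod sq biquat_eps S T * monprod sq biquat_eps (sym_diff S T) R =
    monprod sq biquat_eps T R * monprod sq biquat_eps S (sym_diff T R)"
proof -
  note left = anticomm_sign_sym_diff(1)[OF assms(1,2,3,3), where 'a='a]
  note right = anticomm_sign_sym_diff(2)[OF assms(1,1,2,3), where 'a='a]
  show ?thesis
    using prod_Int_sym_diff[OF assms, of sq]
    by (simp add: monprod_biquat_eps algebra_simps flip: left right)
qed

lemma sym_diff_sym_diff: "sym_diff S (sym_diff S T) = T"
  by blast

lemma sum_Pow_reindex_sym_diff:
  assumes "S \<subseteq> {..<n}"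
  shows "(\<Sum>X\<in>Pow {..<n}. f X) = (\<Sum>T\<in>Pow {..<n}. f (sym_diff S T))"
  by (rule sum.reindex_bij_witness[where i="sym_diff S" and j="sym_diff S"])
    (use assms in \<open>auto simp: sym_diff_sym_diff\<close>)

lemma gen_mult_assoc:
  fixes a b c :: "nat set \<Rightarrow> 'a::comm_ring_1"
  shows "gen_mult n sq biquat_eps (gen_mult n sq biquat_eps a b) c U =
    gen_mult n sq biquat_eps a (gen_mult n sq biquat_eps b c) U"
proof (cases "U \<subseteq> {..<n}")
  case True
  let ?P = "Pow {..<n}" and ?m = "monprod sq biquat_eps"
  have "gen_mult n sq biquat_eps (gen_mult n sq biquat_eps a b) c U =
      (\<Sum>X\<in>?P. \<Sum>S\<in>?P. a S * b (sym_diff S X) * c (sym_diff X U) * (?m S (sym_diff S X) * ?m X (sym_diff X U)))"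
    unfolding gen_mult_eq[OF True]
    by (intro sum.cong refl) (simp add: gen_mult_eq sum_distrib_right mult.assoc mult.left_commute)
  also have "\<dots> = (\<Sum>S\<in>?P. \<Sum>T\<in>?P. a S * b T * c (sym_diff (sym_diff S T) U) *
      (?m S T * ?m (sym_diff S T) (sym_diff (sym_diff S T) U)))"
  proof (subst sum.swap, rule sum.cong[OF refl])
    fix S assume "S \<in> ?P"
    then show "(\<Sum>X\<in>?P. a S * b (sym_diff S X) * c (sym_diff X U) * (?m S (sym_diff S X) * ?m X (sym_diff X U))) =
        (\<Sum>T\<in>?P. a S * b T * c (sym_diff (sym_diff S T) U) * (?m S T * ?m (sym_diff S T) (sym_diff (sym_diff S T) U)))"
      by (subst sum_Pow_reindex_sym_diff[of S n]) (auto simp: sym_diff_sym_diff)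
  qed
  also have "\<dots> = (\<Sum>S\<in>?P. \<Sum>T\<in>?P. a S * b T * c (sym_diff T (sym_diff S U)) *
      (?m T (sym_diff T (sym_diff S U)) * ?m S (sym_diff S U)))"
  proof (intro sum.cong refl)
    fix S T assume "S \<in> ?P" "T \<in> ?P"
    then have fin: "finite S" "finite T" "finite (sym_diff T (sym_diff S U))"
      using True by (auto intro: finite_subset[of _ "{..<n}"])
    have "sym_diff (sym_diff S T) U = sym_diff T (sym_diff S U)"
      "sym_diff T (sym_diff T (sym_diff S U)) = sym_diff S U" by auto
    then show "a S * b T * c (sym_diff (sym_diff S T) U) * (?m S T * ?m (sym_diff S T) (sym_diff (sym_diff S T) U)) =
        a S * b T * c (sym_diff T (sym_diff S U)) * (?m T (sym_diff T (sym_diff S U)) * ?m S (sym_diff S U))"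
      using monprod_cocycle[OF fin, of sq] by simp
  qed
  also have "\<dots> = gen_mult n sq biquat_eps a (gen_mult n sq biquat_eps b c) U"
    unfolding gen_mult_eq[OF True]
  proof (rule sum.cong[OF refl])
    fix S assume "S \<in> ?P"
    then have "sym_diff S U \<subseteq> {..<n}" using True by auto
    then show "(\<Sum>T\<in>?P. a S * b T * c (sym_diff T (sym_diff S U)) *
        (?m T (sym_diff T (sym_diff S U)) * ?m S (sym_diff S U))) =
        a S * gen_mult n sq biquat_eps b c (sym_diff S U) * ?m S (sym_diff S U)"
      by (simp add: gen_mult_eq sum_distrib_left sum_distrib_right algebra_simps)
  qed
  finally show ?thesis .
qed (simp add: gen_mult_outside)

section \<open>Inverses in the absence of zero divisors\<close>

lemma (in vector_space) linear_inj_on_span_imp_surj: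
  assumes "Vector_Spaces.linear scale scale f" and "finite B" and "independent B"
    and "inj_on f (span B)" and "f ` B \<subseteq> span B"
  shows "f ` span B = span B"
proof -
  interpret f: Vector_Spaces.linear scale scale f by fact
  have independent: "independent (f ` B)"
    using assms(3,4) by (rule f.independent_injective_image)
  have card: "card (f ` B) = card B"
    using assms(4) by (meson card_image inj_on_subset span_superset)
  have "span B \<subseteq> span (f ` B)"
  proof
    fix x assume x: "x \<in> span B"
    show "x \<in> span (f ` B)"
    proof (rule ccontr)
      assume x_notin: "x \<notin> span (f ` B)"
      then have "independent (insert x (f ` B))"
        using independent by (rule independent_insertI)
      moreover have "insert x (f ` B) \<subseteq> span B"
        using x assms(5) by blast
      ultimately have "card (insert x (f ` B)) \<le> card B"
        using independent_span_bound[OF assms(2)] by blast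
      moreover have "x \<notin> f ` B"
        using x_notin span_base by blast
      ultimately show False
        using assms(2) card by simp
    qed
  qed
  moreover have "span (f ` B) \<subseteq> span B"
    using assms(5) span_minimal subspace_span by blast
  ultimately show ?thesis
    by (simp add: f.span_image)
qed

definition scale_coeffs :: "'a::field \<Rightarrow> (nat set \<Rightarrow> 'a) \<Rightarrow> nat set \<Rightarrow> 'a" where
  "scale_coeffs c u = (\<lambda>S. c * u S)"

definition gen_monomial :: "nat set \<Rightarrow> nat set \<Rightarrow> 'a::zero_neq_one" where
  "gen_monomial S = (\<lambda>T. if T = S then 1 else 0)"

interpretation coeff_space: vector_space "scale_coeffs :: 'a::field \<Rightarrow> (nat set \<Rightarrow> 'a) \<Rightarrow> _"
  by unfold_locales (auto simp: scale_coeffs_def fun_eq_iff algebra_simps)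

lemma sum_fun_apply: "(sum f A) T = (\<Sum>x\<in>A. f x T)"
  by (induct A rule: infinite_finite_induct) auto

lemma sum_gen_monomials:
  fixes v :: "nat set \<Rightarrow> 'a::field"
  assumes "in_subalgebra {..<n} v"
  shows "(\<Sum>S\<in>Pow {..<n}. scale_coeffs (v S) (gen_monomial S)) = v"
proof
  fix T
  have "(\<Sum>S\<in>Pow {..<n}. scale_coeffs (v S) (gen_monomial S)) T = (if T \<in> Pow {..<n} then v T else 0)"
    by (simp add: sum_fun_apply scale_coeffs_def gen_monomial_def if_distrib cong: if_cong)
  also have "\<dots> = v T"
    using assms by (auto simp: in_subalgebra_def)
  finally show "(\<Sum>S\<in>Pow {..<n}. scale_coeffs (v S) (gen_monomial S)) T = v T" .
qed

lemma independent_gen_monomials: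
  "coeff_space.independent (gen_monomial ` Pow {..<n} :: (nat set \<Rightarrow> 'a::field) set)"
proof
  let ?E = "gen_monomial ` Pow {..<n} :: (nat set \<Rightarrow> 'a) set"
  have fin: "finite ?E" by simp
  have inj: "inj_on gen_monomial (Pow {..<n})"
    by (auto simp: inj_on_def gen_monomial_def fun_eq_iff)
  assume "coeff_space.dependent ?E"
  then obtain c where c: "\<exists>v\<in>?E. c v \<noteq> 0" and sum: "(\<Sum>v\<in>?E. scale_coeffs (c v) v) = 0"
    unfolding coeff_space.dependent_finite[OF fin] by blast
  obtain S where S: "S \<in> Pow {..<n}" "c (gen_monomial S) \<noteq> 0"
    using c by blast
  have "(\<Sum>v\<in>?E. scale_coeffs (c v) v) = (\<Sum>T\<in>Pow {..<n}. scale_coeffs (c (gen_monomial T)) (gen_monomial T))"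
    by (rule sum.reindex[OF inj, unfolded comp_def])
  then have "(\<Sum>T\<in>Pow {..<n}. scale_coeffs (c (gen_monomial T)) (gen_monomial T)) S = 0"
    using sum by simp
  moreover have "(\<Sum>T\<in>Pow {..<n}. scale_coeffs (c (gen_monomial T)) (gen_monomial T)) S = c (gen_monomial S)"
    using S(1) by (simp add: sum_fun_apply scale_coeffs_def gen_monomial_def if_distrib cong: if_cong)
  ultimately show False
    using S(2) by simp
qed

lemma span_gen_monomials:
  "coeff_space.span (gen_monomial ` Pow {..<n}) = {v :: nat set \<Rightarrow> 'a::field. in_subalgebra {..<n} v}"
proof
  show "coeff_space.span (gen_monomial ` Pow {..<n}) \<subseteq> {v :: nat set \<Rightarrow> 'a. in_subalgebra {..<n} v}"
  proof (rule coeff_space.span_minimal)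
    show "gen_monomial ` Pow {..<n} \<subseteq> {v :: nat set \<Rightarrow> 'a. in_subalgebra {..<n} v}"
      by (auto simp: in_subalgebra_def gen_monomial_def split: if_splits)
    show "coeff_space.subspace {v :: nat set \<Rightarrow> 'a. in_subalgebra {..<n} v}"
      by (rule coeff_space.subspaceI) (auto simp: in_subalgebra_def scale_coeffs_def)
  qed
  show "{v :: nat set \<Rightarrow> 'a. in_subalgebra {..<n} v} \<subseteq> coeff_space.span (gen_monomial ` Pow {..<n})"
  proof
    fix v :: "nat set \<Rightarrow> 'a" assume "v \<in> {v. in_subalgebra {..<n} v}"
    then have "v = (\<Sum>S\<in>Pow {..<n}. scale_coeffs (v S) (gen_monomial S))"
      by (simp add: sum_gen_monomials)
    also have "\<dots> \<in> coeff_space.span (gen_monomial ` Pow {..<n})"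
      by (intro coeff_space.span_sum coeff_space.span_scale coeff_space.span_base) auto
    finally show "v \<in> coeff_space.span (gen_monomial ` Pow {..<n})" .
  qed
qed

lemma gen_mult_right_inverse:
  fixes sq :: "nat \<Rightarrow> 'a::field"
  assumes free: "zero_divisor_free n sq {..<n}" and w: "in_subalgebra {..<n} w" "w \<noteq> (\<lambda>_. 0)"
  obtains z where "in_subalgebra {..<n} z" "gen_mult n sq biquat_eps w z = gen_one"
proof -
  let ?f = "gen_mult n sq biquat_eps w" and ?E = "gen_monomial ` Pow {..<n} :: (nat set \<Rightarrow> 'a) set"
  have linear: "Vector_Spaces.linear scale_coeffs scale_coeffs ?f"
  proof unfold_locales
    show "?f (b1 + b2) = ?f b1 + ?f b2" for b1 b2
      unfolding plus_fun_def by (rule ext, rule gen_mult_add_right)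
    show "?f (scale_coeffs r b) = scale_coeffs r (?f b)" for r b
      unfolding scale_coeffs_def by (rule ext, rule gen_mult_scale_right)
  qed
  interpret f: Vector_Spaces.linear scale_coeffs scale_coeffs ?f
    by (rule linear)
  have inj: "inj_on ?f (coeff_space.span ?E)"
  proof (rule f.inj_on_iff_eq_0[OF coeff_space.subspace_span, THEN iffD2], intro ballI impI)
    fix x assume x: "x \<in> coeff_space.span ?E" and fx: "?f x = 0"
    have "in_subalgebra {..<n} x" using x by (simp add: span_gen_monomials)
    moreover have "?f x = (\<lambda>_. 0)" using fx by (simp add: zero_fun_def)
    ultimately have "x = (\<lambda>_. 0)" using zero_divisor_freeD[OF free w(1)] w(2) by blast
    then show "x = 0" by (simp add: zero_fun_def)
  qed
  have "in_subalgebra {..<n} (?f v)" for v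
    by (simp add: in_subalgebra_def gen_mult_outside)
  then have into: "?f ` ?E \<subseteq> coeff_space.span ?E"
    by (auto simp: span_gen_monomials)
  have "gen_one \<in> coeff_space.span ?E"
    by (simp add: span_gen_monomials in_subalgebra_def gen_one_def)
  also have "coeff_space.span ?E = ?f ` coeff_space.span ?E"
    using coeff_space.linear_inj_on_span_imp_surj[OF linear _ independent_gen_monomials inj into] by simp
  finally obtain z where "z \<in> coeff_space.span ?E" "?f z = gen_one"
    by auto
  then show thesis
    using that by (simp add: span_gen_monomials)
qed

lemma monprod_empty: "monprod sq eps {} T = 1" "monprod sq eps S {} = 1"
  by (simp_all add: monprod_def)

lemma gen_mult_one_right:
  assumes "in_subalgebra {..<n} u"
  shows "gen_mult n sq eps u gen_one = (u :: nat set \<Rightarrow> 'a::comm_ring_1)"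
proof
  fix U show "gen_mult n sq eps u gen_one U = u U"
  proof (cases "U \<subseteq> {..<n}")
    case True
    have "gen_mult n sq eps u gen_one U = (\<Sum>S\<in>Pow {..<n}. if S = U then u S else 0)"
      unfolding gen_mult_eq[OF True] by (rule sum.cong[OF refl]) (auto simp: gen_one_def monprod_empty)
    also have "\<dots> = u U" using True by simp
    finally show ?thesis .
  qed (use assms in \<open>simp add: gen_mult_outside in_subalgebra_def\<close>)
qed

lemma gen_mult_one_left:
  assumes "in_subalgebra {..<n} u"
  shows "gen_mult n sq eps gen_one u = (u :: nat set \<Rightarrow> 'a::comm_ring_1)"
proof
  fix U show "gen_mult n sq eps gen_one u U = u U"
  proof (cases "U \<subseteq> {..<n}")
    case True
    have "gen_mult n sq eps gen_one u U = (\<Sum>S\<in>Pow {..<n}. if S = {} then u U else 0)"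
      unfolding gen_mult_eq[OF True] by (rule sum.cong[OF refl]) (auto simp: gen_one_def monprod_empty)
    also have "\<dots> = u U" by simp
    finally show ?thesis .
  qed (use assms in \<open>simp add: gen_mult_outside in_subalgebra_def\<close>)
qed

lemma gen_mult_inverse:
  fixes sq :: "nat \<Rightarrow> 'a::field"
  assumes free: "zero_divisor_free n sq {..<n}" and w: "in_subalgebra {..<n} w" "w \<noteq> (\<lambda>_. 0)"
  obtains z where "in_subalgebra {..<n} z" "gen_mult n sq biquat_eps w z = gen_one"
    "gen_mult n sq biquat_eps z w = gen_one"
proof -
  obtain z where z: "in_subalgebra {..<n} z" and wz: "gen_mult n sq biquat_eps w z = gen_one"
    using gen_mult_right_inverse[OF free w] by blast
  have "z \<noteq> (\<lambda>_. 0)"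
  proof
    assume "z = (\<lambda>_. 0)"
    then have "gen_mult n sq biquat_eps w z {} = 0" by (simp add: gen_mult_zero_right)
    then show False using wz by (simp add: gen_one_def)
  qed
  then obtain y where y: "in_subalgebra {..<n} y" and zy: "gen_mult n sq biquat_eps z y = gen_one"
    using gen_mult_right_inverse[OF free z] by blast
  have "w = gen_mult n sq biquat_eps w (gen_mult n sq biquat_eps z y)"
    by (simp add: zy gen_mult_one_right[OF w(1)])
  also have "\<dots> = gen_mult n sq biquat_eps (gen_mult n sq biquat_eps w z) y"
    by (simp add: fun_eq_iff gen_mult_assoc)
  also have "\<dots> = y"
    by (simp add: wz gen_mult_one_left[OF y])
  finally show thesis
    using that z wz zy by blast
qed

section \<open>The algebra \<open>A\<close> over \<open>K\<close>\<close>

lemma poly_mod_sum: "sum f A mod (z::'a::field poly) = (\<Sum>x\<in>A. f x mod z)"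
  by (induct A rule: infinite_finite_induct) (simp_all add: poly_mod_add_left)

lemma degree_kmod: "degree kmod = 2"
  by (simp add: kmod_def)

lemma degree_less_2_eq: "degree p < 2 \<Longrightarrow> p = [:coeff p 0, coeff p 1:]"
  by (rule poly_eqI) (auto simp: coeff_pCons coeff_eq_0 split: nat.splits)

lemma smult_mult_mod_kmod:
  assumes "degree p < 2" "degree q < 2"
  shows "smult c (p * q) mod kmod = [:c * (coeff p 0 * coeff q 0 + cubic * coeff p 1 * coeff q 1),
    c * (coeff p 0 * coeff q 1 + coeff p 1 * coeff q 0):]"
proof -
  obtain a0 a1 b0 b1 where p: "p = [:a0, a1:]" and q: "q = [:b0, b1:]"
    using degree_less_2_eq assms by metis
  let ?r = "[:c * (a0 * b0 + cubic * a1 * b1), c * (a0 * b1 + a1 * b0):]"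
  have "smult c (p * q) = ?r + [:c * a1 * b1:] * kmod"
    by (simp add: p q kmod_def algebra_simps)
  moreover have "?r mod kmod = ?r"
    by (rule mod_poly_less) (simp add: degree_kmod)
  ultimately have "smult c (p * q) mod kmod = ?r"
    by (simp only: mod_mult_self1)
  then show ?thesis
    by (simp add: p q)
qed

text \<open>An element of \<open>A\<close> has coefficients \<open>a + b y\<close> in \<open>K\<close>. Recording \<open>a\<close> at \<open>S\<close> and \<open>b\<close> at
  \<open>S \<union> {4}\<close> turns \<open>y\<close> into a fifth generator over \<open>k(x)\<close>, central with square \<open>cubic\<close>.\<close>

definition expand_y :: "(nat set \<Rightarrow> kx poly) \<Rightarrow> nat set \<Rightarrow> kx" where
  "expand_y u S = (if 4 \<in> S then coeff (u (S - {4})) 1 else coeff (u S) 0)"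

definition collect_y :: "(nat set \<Rightarrow> kx) \<Rightarrow> nat set \<Rightarrow> kx poly" where
  "collect_y z S = (if S \<subseteq> {..<4} then [:z S, z (insert 4 S):] else 0)"

abbreviation A_sq :: "nat \<Rightarrow> kx poly" where
  "A_sq \<equiv> biquat_sq [:xvar:] [:const_kx t3:] [:xvar - const_kx t1:] [:const_kx t4:]"

lemma A_sq_eq:
  assumes "i < 4"
  shows "A_sq i = [:sq_kx i:]"
proof -
  consider "i = 0" | "i = 1" | "i = 2" | "i = 3"
    using assms by linarith
  then show ?thesis
    by cases (simp_all add: biquat_sq_def sq_kx_simps[unfolded One_nat_def])
qed

lemma is_ring_hom_pCons: "is_ring_hom (\<lambda>c::'a::comm_ring_1. [:c:])"
  by (simp add: is_ring_hom_def one_pCons)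

lemma monprod_A_sq:
  assumes "S \<subseteq> {..<4}"
  shows "monprod A_sq biquat_eps S T = [:monprod sq_kx biquat_eps S T:]"
proof -
  have "[:monprod sq_kx biquat_eps S T:] = monprod ((\<lambda>c. [:c:]) \<circ> sq_kx) biquat_eps S T"
    by (simp add: monprod_def ring_hom_mult[OF is_ring_hom_pCons] ring_hom_prod[OF is_ring_hom_pCons]
        ring_hom_biquat_eps[OF is_ring_hom_pCons])
  also have "\<dots> = monprod A_sq biquat_eps S T"
    unfolding monprod_def using assms by (intro arg_cong2[where f="(*)"] refl prod.cong) (auto simp: A_sq_eq)
  finally show ?thesis by simp
qed

lemma A_mult_outside: "\<not> U \<subseteq> {..<4} \<Longrightarrow> A_mult u v U = 0"
  by (simp add: A_mult_def biquat_mult_def gen_mult_outside)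

lemma A_mult_coeffs:
  assumes U: "U \<subseteq> {..<4}" and u: "u \<in> A_carrier" and v: "v \<in> A_carrier"
  shows "coeff (A_mult u v U) 0 = (\<Sum>S\<in>Pow {..<4}. monprod sq_kx biquat_eps S (sym_diff S U) *
      (coeff (u S) 0 * coeff (v (sym_diff S U)) 0 + cubic * coeff (u S) 1 * coeff (v (sym_diff S U)) 1))"
    and "coeff (A_mult u v U) 1 = (\<Sum>S\<in>Pow {..<4}. monprod sq_kx biquat_eps S (sym_diff S U) *
      (coeff (u S) 0 * coeff (v (sym_diff S U)) 1 + coeff (u S) 1 * coeff (v (sym_diff S U)) 0))"
proof -
  have "degree (u S) < 2" "degree (v S) < 2" for S
    using u v by (auto simp: A_carrier_def K_elem_def)
  then have "A_mult u v U = (\<Sum>S\<in>Pow {..<4}. [:monprod sq_kx biquat_eps S (sym_diff S U) *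
      (coeff (u S) 0 * coeff (v (sym_diff S U)) 0 + cubic * coeff (u S) 1 * coeff (v (sym_diff S U)) 1),
      monprod sq_kx biquat_eps S (sym_diff S U) *
      (coeff (u S) 0 * coeff (v (sym_diff S U)) 1 + coeff (u S) 1 * coeff (v (sym_diff S U)) 0):])"
    unfolding A_mult_def biquat_mult_def gen_mult_eq[OF U] poly_mod_sum
    by (intro sum.cong refl) (simp add: monprod_A_sq smult_mult_mod_kmod)
  then show "coeff (A_mult u v U) 0 = (\<Sum>S\<in>Pow {..<4}. monprod sq_kx biquat_eps S (sym_diff S U) *
      (coeff (u S) 0 * coeff (v (sym_diff S U)) 0 + cubic * coeff (u S) 1 * coeff (v (sym_diff S U)) 1))"
    and "coeff (A_mult u v U) 1 = (\<Sum>S\<in>Pow {..<4}. monprod sq_kx biquat_eps S (sym_diff S U) *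
      (coeff (u S) 0 * coeff (v (sym_diff S U)) 1 + coeff (u S) 1 * coeff (v (sym_diff S U)) 0))"
    by (simp_all add: coeff_sum)
qed

lemma sum_Pow_lessThan_5:
  "(\<Sum>S\<in>Pow {..<5}. f S) = (\<Sum>S\<in>Pow {..<4}. f S + f (insert (4::nat) S))"
proof -
  have "{S\<in>Pow {..<5::nat}. 4 \<notin> S} = Pow {..<4}"
    by (auto simp: subset_iff less_Suc_eq numeral_eq_Suc)
  then show ?thesis
    using sum_Pow_split_member[of 4 5 f] by simp
qed

lemma expand_y_avoiding_4:
  assumes "4 \<notin> S"
  shows "expand_y u S = coeff (u S) 0" "expand_y u (insert 4 S) = coeff (u S) 1"
  using assms by (simp_all add: expand_y_def Diff_insert_absorb)

lemma monprod_sq_kx_insert_4: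
  assumes "S \<subseteq> {..<4}" "T \<subseteq> {..<4}"
  shows "monprod sq_kx biquat_eps (insert 4 S) (insert 4 T) = monprod sq_kx biquat_eps S T * cubic"
    "monprod sq_kx biquat_eps S (insert 4 T) = monprod sq_kx biquat_eps S T"
    "monprod sq_kx biquat_eps (insert 4 S) T = monprod sq_kx biquat_eps S T"
proof -
  have "finite S" "finite T" "4 \<notin> S" "4 \<notin> T"
    using assms by (auto intro: finite_subset[of _ "{..<4}"])
  moreover have "biquat_eps 4 = (\<lambda>_. 1::kx)" "biquat_eps i 4 = (1::kx)" for i :: nat
    by (simp_all add: biquat_eps_def fun_eq_iff)
  ultimately show "monprod sq_kx biquat_eps (insert 4 S) (insert 4 T) = monprod sq_kx biquat_eps S T * cubic"
    "monprod sq_kx biquat_eps S (insert 4 T) = monprod sq_kx biquat_eps S T"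
    "monprod sq_kx biquat_eps (insert 4 S) T = monprod sq_kx biquat_eps S T"
    by (simp_all add: monprod_insert_both monprod_insert_left monprod_insert_right sq_kx_simps)
qed

lemma expand_y_summands:
  assumes S: "S \<subseteq> {..<4}" and U: "U \<subseteq> {..<4}"
  shows "expand_y u S * expand_y v (sym_diff S U) * monprod sq_kx biquat_eps S (sym_diff S U) +
      expand_y u (insert 4 S) * expand_y v (sym_diff (insert 4 S) U) *
        monprod sq_kx biquat_eps (insert 4 S) (sym_diff (insert 4 S) U) =
      monprod sq_kx biquat_eps S (sym_diff S U) *
        (coeff (u S) 0 * coeff (v (sym_diff S U)) 0 + cubic * coeff (u S) 1 * coeff (v (sym_diff S U)) 1)"
    and "expand_y u S * expand_y v (sym_diff S (insert 4 U)) * monprod sq_kx biquat_eps S (sym_diff S (insert 4 U)) +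
      expand_y u (insert 4 S) * expand_y v (sym_diff (insert 4 S) (insert 4 U)) *
        monprod sq_kx biquat_eps (insert 4 S) (sym_diff (insert 4 S) (insert 4 U)) =
      monprod sq_kx biquat_eps S (sym_diff S U) *
        (coeff (u S) 0 * coeff (v (sym_diff S U)) 1 + coeff (u S) 1 * coeff (v (sym_diff S U)) 0)"
proof -
  have T: "sym_diff S U \<subseteq> {..<4}" "4 \<notin> S" "4 \<notin> sym_diff S U"
    using S U by auto
  have "sym_diff (insert 4 S) U = insert 4 (sym_diff S U)" "sym_diff S (insert 4 U) = insert 4 (sym_diff S U)"
    "sym_diff (insert 4 S) (insert 4 U) = sym_diff S U"
    using S U by auto
  note eqs = this expand_y_avoiding_4[OF T(2)] expand_y_avoiding_4[OF T(3)] monprod_sq_kx_insert_4[OF S T(1)]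
  show "expand_y u S * expand_y v (sym_diff S U) * monprod sq_kx biquat_eps S (sym_diff S U) +
      expand_y u (insert 4 S) * expand_y v (sym_diff (insert 4 S) U) *
        monprod sq_kx biquat_eps (insert 4 S) (sym_diff (insert 4 S) U) =
      monprod sq_kx biquat_eps S (sym_diff S U) *
        (coeff (u S) 0 * coeff (v (sym_diff S U)) 0 + cubic * coeff (u S) 1 * coeff (v (sym_diff S U)) 1)"
    unfolding eqs by (simp add: algebra_simps)
  show "expand_y u S * expand_y v (sym_diff S (insert 4 U)) * monprod sq_kx biquat_eps S (sym_diff S (insert 4 U)) +
      expand_y u (insert 4 S) * expand_y v (sym_diff (insert 4 S) (insert 4 U)) *
        monprod sq_kx biquat_eps (insert 4 S) (sym_diff (insert 4 S) (insert 4 U)) =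
      monprod sq_kx biquat_eps S (sym_diff S U) *
        (coeff (u S) 0 * coeff (v (sym_diff S U)) 1 + coeff (u S) 1 * coeff (v (sym_diff S U)) 0)"
    unfolding eqs by (simp add: algebra_simps)
qed

lemma gen_mult_expand_y:
  assumes U: "U \<subseteq> {..<4}"
  shows "gen_mult 5 sq_kx biquat_eps (expand_y u) (expand_y v) U =
      (\<Sum>S\<in>Pow {..<4}. monprod sq_kx biquat_eps S (sym_diff S U) *
        (coeff (u S) 0 * coeff (v (sym_diff S U)) 0 + cubic * coeff (u S) 1 * coeff (v (sym_diff S U)) 1))"
      (is ?even)
    and "gen_mult 5 sq_kx biquat_eps (expand_y u) (expand_y v) (insert 4 U) =
      (\<Sum>S\<in>Pow {..<4}. monprod sq_kx biquat_eps S (sym_diff S U) *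
        (coeff (u S) 0 * coeff (v (sym_diff S U)) 1 + coeff (u S) 1 * coeff (v (sym_diff S U)) 0))"
      (is ?odd)
proof -
  have U5: "U \<subseteq> {..<5}" "insert 4 U \<subseteq> {..<5}" using U by auto
  show ?even
    unfolding gen_mult_eq[OF U5(1)] sum_Pow_lessThan_5
    by (intro sum.cong refl expand_y_summands) (use U in auto)
  show ?odd
    unfolding gen_mult_eq[OF U5(2)] sum_Pow_lessThan_5
    by (intro sum.cong refl expand_y_summands) (use U in auto)
qed

lemma expand_y_A_mult:
  assumes "u \<in> A_carrier" "v \<in> A_carrier"
  shows "expand_y (A_mult u v) = gen_mult 5 sq_kx biquat_eps (expand_y u) (expand_y v)"
proof
  fix U
  show "expand_y (A_mult u v) U = gen_mult 5 sq_kx biquat_eps (expand_y u) (expand_y v) U"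
  proof (cases "U - {4} \<subseteq> {..<4}")
    case U: True
    show ?thesis
    proof (cases "4 \<in> U")
      case False
      with U have "U \<subseteq> {..<4}" by auto
      then show ?thesis
        using False by (simp add: expand_y_def A_mult_coeffs(1)[OF _ assms] gen_mult_expand_y(1))
    next
      case True
      then have "expand_y (A_mult u v) U = coeff (A_mult u v (U - {4})) 1"
        by (simp add: expand_y_def)
      also have "\<dots> = gen_mult 5 sq_kx biquat_eps (expand_y u) (expand_y v) (insert 4 (U - {4}))"
        by (simp only: A_mult_coeffs(2)[OF U assms] gen_mult_expand_y(2)[OF U])
      also have "insert 4 (U - {4}) = U"
        using True by auto
      finally show ?thesis .
    qed
  next
    case False
    then have "\<not> U \<subseteq> {..<5}" "\<not> U \<subseteq> {..<4}"
      by (auto simp: subset_iff less_Suc_eq numeral_eq_Suc)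
    then show ?thesis
      using False by (simp add: expand_y_def gen_mult_outside A_mult_outside)
  qed
qed

lemma in_subalgebra_expand_y:
  assumes "u \<in> A_carrier"
  shows "in_subalgebra {..<5} (expand_y u)"
  unfolding in_subalgebra_def
proof (intro allI impI)
  fix S :: "nat set" assume "\<not> S \<subseteq> {..<5}"
  then have "\<not> S \<subseteq> {..<4}" "\<not> S - {4} \<subseteq> {..<4}"
    by (auto simp: subset_iff less_Suc_eq numeral_eq_Suc)
  then show "expand_y u S = 0"
    using assms by (simp add: expand_y_def A_carrier_def)
qed

lemma collect_expand_y: "u \<in> A_carrier \<Longrightarrow> collect_y (expand_y u) = u"
proof
  fix S assume u: "u \<in> A_carrier"
  show "collect_y (expand_y u) S = u S"
  proof (cases "S \<subseteq> {..<4}")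
    case True
    then have "4 \<notin> S" by auto
    moreover have "degree (u S) < 2" using u by (simp add: A_carrier_def K_elem_def)
    ultimately show ?thesis
      using True degree_less_2_eq[of "u S"] by (simp add: collect_y_def expand_y_def)
  qed (use u in \<open>simp add: collect_y_def A_carrier_def\<close>)
qed

lemma expand_collect_y: "in_subalgebra {..<5} z \<Longrightarrow> expand_y (collect_y z) = z"
proof
  fix S assume z: "in_subalgebra {..<5} z"
  show "expand_y (collect_y z) S = z S"
  proof (cases "S - {4} \<subseteq> {..<4}")
    case True
    then show ?thesis by (auto simp: expand_y_def collect_y_def insert_absorb)
  next
    case False
    then have "\<not> S \<subseteq> {..<5}" "\<not> S \<subseteq> {..<4}"
      by (auto simp: subset_iff less_Suc_eq numeral_eq_Suc)
    then show ?thesis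
      using z False by (auto simp: expand_y_def collect_y_def in_subalgebra_def)
  qed
qed

lemma collect_y_in_A_carrier: "collect_y z \<in> A_carrier"
  by (auto simp: A_carrier_def K_elem_def collect_y_def)

lemma A_mult_in_A_carrier: "A_mult u v \<in> A_carrier"
proof -
  have "kmod \<noteq> 0"
    by (simp add: kmod_def)
  then have "A_mult u v S = 0 \<or> degree (A_mult u v S) < degree kmod" for S
    unfolding A_mult_def by (rule degree_mod_less)
  then have "degree (A_mult u v S) < 2" for S
    using degree_kmod by (metis degree_0 zero_less_numeral)
  then show ?thesis
    by (simp add: A_carrier_def K_elem_def A_mult_outside)
qed

lemma collect_y_gen_one: "collect_y gen_one = A_one"
  by (auto simp: collect_y_def A_one_def gen_one_def)

lemma collect_y_zero: "collect_y (\<lambda>_. 0) = A_zero"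
  by (auto simp: collect_y_def A_zero_def)

lemma A_mult_via_expand_y:
  assumes "u \<in> A_carrier" "v \<in> A_carrier"
  shows "A_mult u v = collect_y (gen_mult 5 sq_kx biquat_eps (expand_y u) (expand_y v))"
  using collect_expand_y[OF A_mult_in_A_carrier, of u v] by (simp add: expand_y_A_mult[OF assms])

theorem theorem6p1:
  shows "\<forall>u\<in>A_carrier. u \<noteq> A_zero \<longrightarrow>
           (\<exists>v\<in>A_carrier. A_mult u v = A_one \<and> A_mult v u = A_one)"
proof (intro ballI impI)
  fix u assume u: "u \<in> A_carrier" and "u \<noteq> A_zero"
  then have "expand_y u \<noteq> (\<lambda>_. 0)"
    using collect_expand_y collect_y_zero by metis
  then obtain z where z: "in_subalgebra {..<5} z"
    and "gen_mult 5 sq_kx biquat_eps (expand_y u) z = gen_one"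
    and "gen_mult 5 sq_kx biquat_eps z (expand_y u) = gen_one"
    using gen_mult_inverse[OF zero_divisor_free_kx in_subalgebra_expand_y[OF u]] by blast
  moreover have "collect_y z \<in> A_carrier" "expand_y (collect_y z) = z"
    using z by (simp_all add: collect_y_in_A_carrier expand_collect_y)
  ultimately show "\<exists>v\<in>A_carrier. A_mult u v = A_one \<and> A_mult v u = A_one"
    using u by (intro bexI[of _ "collect_y z"]) (simp_all add: A_mult_via_expand_y collect_y_gen_one)
qed

end
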